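(* Let $\Omega_1\subset\Omega_2\subset\mathbb C$ be Borel sets. Then $i(\Omega_2,\Omega_1)(E\Lambda(\Omega_1))\subset E\Lambda(\Omega_2)$, and $i(\Omega_2,\Omega_1)$ restricted to $E\Lambda(\Omega_1)$ is isometric both for the $\||\cdot\||$-norms and for the $\||\cdot\||_1$-norms, and preserves $L(\cdot)$ and $L_1(\cdot)$. Moreover $\varepsilon(\Omega_1,\Omega_2)(E\Lambda(\Omega_2))=E\Lambda(\Omega_1)$, $\varepsilon(\Omega_1,\Omega_2)$ is contractive both in the $\||\cdot\||$-norms and in the $\||\cdot\||_1$-norms, and $\varepsilon(\Omega_1,\Omega_2)\,i(\Omega_2,\Omega_1)(T)=T$ for all $T$.
   Context: $\lambda$ is Lebesgue measure; $|X|_2$ is the Hilbert–Schmidt norm ($+\infty$ if not Hilbert–Schmidt). For a Borel set $\Omega$ and $f\in L^\infty(\Omega,\lambda)$, $M_f$ is multiplication by $f$ on $L^2(\Omega,\lambda)$, $Df(s,t)=\frac{f(s)-f(t)}{s-t}$, $\Lambda(\Omega)=\{f\in L^\infty(\Omega): Df\in L^\infty(\Omega\times\Omega)\}$, $L(T)=\sup\{|[M_f,T]|_2: f\in\Lambda(\Omega),\|Df\|_\infty\le1\}$, $E\Lambda(\Omega)=\{T\in\mathcal B(L^2(\Omega,\lambda)):L(T)<\infty\}$ with norm $\||T\||=\|T\|+L(T)$. With $e(w)(z)=\exp(i\,\mathrm{Re}(z\bar w))$ and $U(w)=M_{e(w)}$, $L_1(T)=\sup_{w\ne0}|w|^{-1}|[T,U(w)]|_2$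 and $\||T\||_1=\|T\|+L_1(T)$. For $\Omega_1\subset\Omega_2$, $i(\Omega_2,\Omega_1):\mathcal B(L^2(\Omega_1,\lambda))\to\mathcal B(L^2(\Omega_2,\lambda))$ is $T\mapsto T\oplus0$ with respect to $L^2(\Omega_2)=L^2(\Omega_1)\oplus L^2(\Omega_2\setminus\Omega_1)$, and $\varepsilon(\Omega_1,\Omega_2):\mathcal B(L^2(\Omega_2,\lambda))\to\mathcal B(L^2(\Omega_1,\lambda))$ is $S\mapsto M_{\chi_{\Omega_1}}SM_{\chi_{\Omega_1}}|_{L^2(\Omega_1,\lambda)}$, $\chi_{\Omega_1}$ the indicator of $\Omega_1$. *)

theory Defs
  imports "HOL-Analysis.Analysis"
begin

text \<open>Functions on the complex plane; Lebesgue measure is lborel on complex (2-dim).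
 Elements of L2(Omega) are represented by square-integrable Borel functions that
 vanish (exactly) outside Omega; operators by maps on such representatives.\<close>

definition L2 :: "complex set \<Rightarrow> (complex \<Rightarrow> complex) set" where
  "L2 \<Omega> = {f. f \<in> borel_measurable lborel \<and> (\<forall>x. x \<notin> \<Omega> \<longrightarrow> f x = 0)
              \<and> integrable lborel (\<lambda>x. (cmod (f x))^2)}"

definition l2norm :: "(complex \<Rightarrow> complex) \<Rightarrow> real" where
  "l2norm f = sqrt (integral\<^sup>L lborel (\<lambda>x. (cmod (f x))^2))"

definition ip :: "(complex \<Rightarrow> complex) \<Rightarrow> (complex \<Rightarrow> complex) \<Rightarrow> complex" where
  "ip f g = integral\<^sup>L lborel (\<lambda>x. f x * cnj (g x))"

type_synonym op = "(complex \<Rightarrow> complex) \<Rightarrow> (complex \<Rightarrow> complex)"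

definition bop :: "complex set \<Rightarrow> op \<Rightarrow> bool" where
  "bop \<Omega> T \<longleftrightarrow>
     (\<forall>f\<in>L2 \<Omega>. T f \<in> L2 \<Omega>) \<and>
     (\<forall>f\<in>L2 \<Omega>. \<forall>g\<in>L2 \<Omega>. (AE x in lborel. f x = g x) \<longrightarrow> (AE x in lborel. T f x = T g x)) \<and>
     (\<forall>f\<in>L2 \<Omega>. \<forall>g\<in>L2 \<Omega>. \<forall>a b::complex.
         AE x in lborel. T (\<lambda>y. a * f y + b * g y) x = a * T f x + b * T g x) \<and>
     (\<exists>K. \<forall>f\<in>L2 \<Omega>. l2norm (T f) \<le> K * l2norm f)"

definition op_eq :: "complex set \<Rightarrow> op \<Rightarrow> op \<Rightarrow> bool" where
  "op_eq \<Omega> T S \<longleftrightarrow> (\<forall>f\<in>L2 \<Omega>. AE x in lborel. T f x = S f x)"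

definition opnorm :: "complex set \<Rightarrow> op \<Rightarrow> real" where
  "opnorm \<Omega> T = Sup ((\<lambda>f. l2norm (T f)) ` {f \<in> L2 \<Omega>. l2norm f \<le> 1})"

definition orthonormal :: "(complex \<Rightarrow> complex) set \<Rightarrow> bool" where
  "orthonormal S \<longleftrightarrow> (\<forall>e\<in>S. ip e e = 1) \<and> (\<forall>e\<in>S. \<forall>d\<in>S. e \<noteq> d \<longrightarrow> ip e d = 0)"

text \<open>Hilbert-Schmidt norm (infinity if not Hilbert-Schmidt): supremum over finite
 orthonormal families of (sum of squared norms of images)^(1/2).\<close>
definition hs_norm :: "complex set \<Rightarrow> op \<Rightarrow> ennreal" where
  "hs_norm \<Omega> X = (SUP S \<in> {S. finite S \<and> S \<subseteq> L2 \<Omega> \<and> orthonormal S}.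
                     ennreal (sqrt (\<Sum>e\<in>S. (l2norm (X e))^2)))"

definition Linf :: "complex set \<Rightarrow> (complex \<Rightarrow> complex) \<Rightarrow> bool" where
  "Linf \<Omega> f \<longleftrightarrow> f \<in> borel_measurable lborel \<and>
     (\<exists>B. AE x in lborel. x \<in> \<Omega> \<longrightarrow> cmod (f x) \<le> B)"

text \<open>f in Lambda(Omega) with ||Df||_infty \<le> 1 (the diagonal is a null set).\<close>
definition Lip1 :: "complex set \<Rightarrow> (complex \<Rightarrow> complex) \<Rightarrow> bool" where
  "Lip1 \<Omega> f \<longleftrightarrow> Linf \<Omega> f \<and>
     (AE p in (lborel \<Otimes>\<^sub>M lborel). fst p \<in> \<Omega> \<and> snd p \<in> \<Omega> \<longrightarrow>
         cmod (f (fst p) - f (snd p)) \<le> cmod (fst p - snd p))"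

definition Mult :: "(complex \<Rightarrow> complex) \<Rightarrow> op" where
  "Mult f = (\<lambda>g x. f x * g x)"

definition commut :: "op \<Rightarrow> op \<Rightarrow> op" where
  "commut A B = (\<lambda>g x. A (B g) x - B (A g) x)"

definition LL :: "complex set \<Rightarrow> op \<Rightarrow> ennreal" where
  "LL \<Omega> T = (SUP f \<in> {f. Lip1 \<Omega> f}. hs_norm \<Omega> (commut (Mult f) T))"

definition EL :: "complex set \<Rightarrow> op set" where
  "EL \<Omega> = {T. bop \<Omega> T \<and> LL \<Omega> T < \<infinity>}"

definition tnorm :: "complex set \<Rightarrow> op \<Rightarrow> ennreal" where
  "tnorm \<Omega> T = ennreal (opnorm \<Omega> T) + LL \<Omega> T"

definition ee :: "complex \<Rightarrow> complex \<Rightarrow> complex" where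
  "ee w z = exp (\<i> * of_real (Re (z * cnj w)))"

definition UU :: "complex \<Rightarrow> op" where
  "UU w = Mult (ee w)"

definition LL1 :: "complex set \<Rightarrow> op \<Rightarrow> ennreal" where
  "LL1 \<Omega> T = (SUP w \<in> {w. w \<noteq> 0}. ennreal (1 / cmod w) * hs_norm \<Omega> (commut T (UU w)))"

definition tnorm1 :: "complex set \<Rightarrow> op \<Rightarrow> ennreal" where
  "tnorm1 \<Omega> T = ennreal (opnorm \<Omega> T) + LL1 \<Omega> T"

text \<open>i(Omega2,Omega1): T \<mapsto> T \<oplus> 0.\<close>
definition iop :: "complex set \<Rightarrow> complex set \<Rightarrow> op \<Rightarrow> op" where
  "iop \<Omega>2 \<Omega>1 T = (\<lambda>g. T (\<lambda>y. indicator \<Omega>1 y * g y))"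

text \<open>epsilon(Omega1,Omega2): S \<mapsto> M_chi S M_chi restricted to L2(Omega1).\<close>
definition eop :: "complex set \<Rightarrow> complex set \<Rightarrow> op \<Rightarrow> op" where
  "eop \<Omega>1 \<Omega>2 S = (\<lambda>f x. indicator \<Omega>1 x * S (\<lambda>y. indicator \<Omega>1 y * f y) x)"

end

theory Submission
  imports Defs
begin

text \<open>With \<open>\<chi>\<close> the indicator of \<open>\<Omega>1\<close>, the embedding \<open>i(T) = T M\<^sub>\<chi>\<close> and the compression
  \<open>\<epsilon>(S) = M\<^sub>\<chi> S M\<^sub>\<chi>\<close> commute with multiplication operators up to the projection \<open>M\<^sub>\<chi>\<close>. Hence operator
  norms and commutators with the unitaries \<open>U(w)\<close> are transported directly: a Hilbert--Schmidt
  norm is unchanged by the embedding (by Bessel's inequality) and can only drop under compression,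
  and \<open>\<epsilon> \<circ> i\<close> is the identity. For \<open>L\<close> the suprema range over different symbol classes; every
  1-Lipschitz symbol on \<open>\<Omega>1\<close> is, after discarding a null set on which it is not Lipschitz, the
  restriction of a bounded 1-Lipschitz symbol on \<open>\<Omega>2\<close> by Kirszbraun's extension theorem.\<close>

section \<open>Square-integrable functions\<close>

lemma borel_measurable_cnj [measurable]:
  "g \<in> borel_measurable M \<Longrightarrow> (\<lambda>x. cnj (g x)) \<in> borel_measurable M"
  by (rule borel_measurable_continuous_on[where f=cnj]) (auto intro: continuous_intros)

lemma L2_borel_measurable: "f \<in> L2 \<Omega> \<Longrightarrow> f \<in> borel_measurable lborel"
  by (simp add: L2_def)

lemma L2_zero: "(\<lambda>x. 0) \<in> L2 \<Omega>"
  by (simp add: L2_def)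

lemma L2_scale: "f \<in> L2 \<Omega> \<Longrightarrow> (\<lambda>x. c * f x) \<in> L2 \<Omega>"
  by (auto simp: L2_def norm_mult power_mult_distrib intro!: integrable_mult_right)

lemma L2_add:
  assumes f: "f \<in> L2 \<Omega>" and g: "g \<in> L2 \<Omega>"
  shows "(\<lambda>x. f x + g x) \<in> L2 \<Omega>"
proof -
  have "integrable lborel (\<lambda>x. (cmod (f x + g x))^2)"
  proof (rule Bochner_Integration.integrable_bound)
    show "integrable lborel (\<lambda>x. 2 * (cmod (f x))^2 + 2 * (cmod (g x))^2)"
      using f g by (auto simp: L2_def)
    show "AE x in lborel. norm ((cmod (f x + g x))^2) \<le> norm (2 * (cmod (f x))^2 + 2 * (cmod (g x))^2)"
    proof (intro AE_I2)
      fix x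
      have "(cmod (f x + g x))^2 \<le> (cmod (f x) + cmod (g x))^2"
        by (simp add: power_mono norm_triangle_ineq)
      also have "\<dots> \<le> 2 * (cmod (f x))^2 + 2 * (cmod (g x))^2"
        using sum_squares_bound[of "cmod (f x)" "cmod (g x)"] by (simp add: power2_sum)
      finally show "norm ((cmod (f x + g x))^2) \<le> norm (2 * (cmod (f x))^2 + 2 * (cmod (g x))^2)"
        by simp
    qed
  qed (use f g in \<open>auto simp: L2_def\<close>)
  then show ?thesis
    using f g by (auto simp: L2_def)
qed

lemma L2_diff: "f \<in> L2 \<Omega> \<Longrightarrow> g \<in> L2 \<Omega> \<Longrightarrow> (\<lambda>x. f x - g x) \<in> L2 \<Omega>"
  using L2_add[of f \<Omega> "\<lambda>x. (-1) * g x"] L2_scale[of g \<Omega> "-1"] by simp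

lemma L2_sum:
  "finite U \<Longrightarrow> (\<And>u. u \<in> U \<Longrightarrow> h u \<in> L2 \<Omega>) \<Longrightarrow> (\<lambda>x. \<Sum>u\<in>U. c u * h u x) \<in> L2 \<Omega>"
proof (induction U rule: finite_induct)
  case (insert a U)
  then have "(\<lambda>x. c a * h a x + (\<Sum>u\<in>U. c u * h u x)) \<in> L2 \<Omega>"
    by (intro L2_add L2_scale) auto
  with insert show ?case
    by simp
qed (simp add: L2_zero)

lemma L2_mono: "\<Omega>1 \<subseteq> \<Omega>2 \<Longrightarrow> L2 \<Omega>1 \<subseteq> L2 \<Omega>2"
  by (auto simp: L2_def)

lemma L2_indicator_mult:
  assumes "A \<in> sets borel" "f \<in> L2 \<Omega>"
  shows "(\<lambda>y. indicator A y * f y) \<in> L2 A"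
proof -
  have "(\<lambda>y. (cmod (indicator A y * f y))^2) = (\<lambda>y. (cmod (f y))^2 * indicator A y)"
    by (auto simp: indicator_def)
  moreover have "integrable lborel (\<lambda>y. (cmod (f y))^2 * indicator A y)"
    using assms by (intro integrable_real_mult_indicator) (auto simp: L2_def)
  ultimately show ?thesis
    using assms by (auto simp: L2_def)
qed

lemma indicator_mult_L2: "f \<in> L2 \<Omega> \<Longrightarrow> (\<lambda>y. indicator \<Omega> y * f y) = f"
proof
  fix y
  assume "f \<in> L2 \<Omega>"
  then show "indicator \<Omega> y * f y = f y"
    by (cases "y \<in> \<Omega>") (auto simp: L2_def)
qed

lemma L2_mult_Linf:
  assumes f: "Linf \<Omega> f" and e: "e \<in> L2 \<Omega>"
  shows "(\<lambda>x. f x * e x) \<in> L2 \<Omega>"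
proof -
  obtain B where B: "AE x in lborel. x \<in> \<Omega> \<longrightarrow> cmod (f x) \<le> B"
    using f by (auto simp: Linf_def)
  have "integrable lborel (\<lambda>x. (cmod (f x * e x))^2)"
  proof (rule Bochner_Integration.integrable_bound)
    show "integrable lborel (\<lambda>x. B^2 * (cmod (e x))^2)"
      using e by (auto simp: L2_def)
    show "AE x in lborel. norm ((cmod (f x * e x))^2) \<le> norm (B^2 * (cmod (e x))^2)"
      using B
    proof eventually_elim
      case (elim x)
      show ?case
      proof (cases "x \<in> \<Omega>")
        case True
        then have "(cmod (f x))^2 \<le> B^2"
          using elim by (simp add: abs_le_square_iff order.trans[OF _ abs_ge_self] power_mono)
        then show ?thesis
          by (simp add: norm_mult power_mult_distrib mult_right_mono)
      qed (use e in \<open>simp add: L2_def\<close>)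
    qed
  qed (use f e in \<open>auto simp: L2_def Linf_def\<close>)
  then show ?thesis
    using e f by (auto simp: L2_def Linf_def)
qed

section \<open>The inner product of \<open>L2\<close>\<close>

lemma l2norm_nonneg: "l2norm f \<ge> 0"
  by (simp add: l2norm_def)

lemma l2norm_power2: "(l2norm f)^2 = integral\<^sup>L lborel (\<lambda>x. (cmod (f x))^2)"
  by (simp add: l2norm_def)

lemma ip_self: "ip f f = complex_of_real ((l2norm f)^2)"
proof -
  have "(\<lambda>x. f x * cnj (f x)) = (\<lambda>x. complex_of_real ((cmod (f x))^2))"
    by (metis complex_norm_square of_real_power)
  then show ?thesis
    unfolding ip_def l2norm_power2 by (simp only: integral_complex_of_real)
qed

lemma l2norm_cong_AE:
  "f \<in> borel_measurable lborel \<Longrightarrow> g \<in> borel_measurable lborel \<Longrightarrow>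
   (AE x in lborel. f x = g x) \<Longrightarrow> l2norm f = l2norm g"
  unfolding l2norm_def by (subst integral_cong_AE[where g="\<lambda>x. (cmod (g x))^2"]) auto

lemma l2norm_mono_AE:
  assumes f: "f \<in> borel_measurable lborel" and g: "g \<in> L2 \<Omega>"
    and le: "AE x in lborel. cmod (f x) \<le> cmod (g x)"
  shows "l2norm f \<le> l2norm g"
proof -
  have ig: "integrable lborel (\<lambda>x. (cmod (g x))^2)"
    using g by (simp add: L2_def)
  have "integrable lborel (\<lambda>x. (cmod (f x))^2)"
    by (rule Bochner_Integration.integrable_bound[OF ig])
       (use f le in \<open>auto elim!: AE_mp intro!: AE_I2 power_mono\<close>)
  then have "integral\<^sup>L lborel (\<lambda>x. (cmod (f x))^2) \<le> integral\<^sup>L lborel (\<lambda>x. (cmod (g x))^2)"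
    using ig le by (intro integral_mono_AE) (auto elim!: AE_mp intro!: AE_I2 power_mono)
  then show ?thesis
    unfolding l2norm_def by simp
qed

lemma l2norm_indicator_mult_le:
  assumes "f \<in> L2 \<Omega>" "A \<in> sets borel"
  shows "l2norm (\<lambda>y. indicator A y * f y) \<le> l2norm f"
  by (rule l2norm_mono_AE[OF L2_borel_measurable[OF L2_indicator_mult[OF assms(2,1)]] assms(1)])
     (simp add: indicator_def norm_mult)

lemma l2norm_eq_0_imp_AE_zero:
  assumes "f \<in> L2 \<Omega>" "l2norm f = 0"
  shows "AE x in lborel. f x = 0"
proof -
  have "AE x in lborel. (cmod (f x))^2 = 0"
    using assms integral_nonneg_eq_0_iff_AE[of lborel "\<lambda>x. (cmod (f x))^2"]
    by (auto simp: l2norm_def L2_def)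
  then show ?thesis
    by simp
qed

lemma integrable_ip:
  assumes "f \<in> L2 \<Omega>" "g \<in> L2 \<Omega>"
  shows "integrable lborel (\<lambda>x. f x * cnj (g x))"
proof (rule Bochner_Integration.integrable_bound)
  show "integrable lborel (\<lambda>x. (cmod (f x))^2 + (cmod (g x))^2)"
    using assms by (auto simp: L2_def)
  show "AE x in lborel. norm (f x * cnj (g x)) \<le> norm ((cmod (f x))^2 + (cmod (g x))^2)"
  proof (intro AE_I2)
    fix x
    have "cmod (f x) * cmod (g x) \<le> (cmod (f x))^2 + (cmod (g x))^2"
      using sum_squares_bound[of "cmod (f x)" "cmod (g x)"]
        mult_nonneg_nonneg[OF norm_ge_zero norm_ge_zero, of "f x" "g x"] by linarith
    then show "norm (f x * cnj (g x)) \<le> norm ((cmod (f x))^2 + (cmod (g x))^2)"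
      by (simp add: norm_mult)
  qed
qed (use assms in \<open>auto simp: L2_def\<close>)

lemma ip_cnj: "ip g f = cnj (ip f g)"
  unfolding ip_def by (subst Bochner_Integration.integral_cnj[symmetric]) (simp add: mult.commute)

lemma ip_scale_left: "ip (\<lambda>x. c * f x) g = c * ip f g"
  unfolding ip_def by (simp add: mult.assoc)

lemma ip_scale_right: "ip g (\<lambda>x. c * f x) = cnj c * ip g f"
  by (subst ip_cnj) (simp add: ip_scale_left ip_cnj[of g])

lemma ip_add_left:
  "f \<in> L2 \<Omega> \<Longrightarrow> f' \<in> L2 \<Omega> \<Longrightarrow> g \<in> L2 \<Omega> \<Longrightarrow> ip (\<lambda>x. f x + f' x) g = ip f g + ip f' g"
  unfolding ip_def using integrable_ip[of f \<Omega> g] integrable_ip[of f' \<Omega> g]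
  by (simp add: distrib_right)

lemma ip_diff_left:
  "f \<in> L2 \<Omega> \<Longrightarrow> f' \<in> L2 \<Omega> \<Longrightarrow> g \<in> L2 \<Omega> \<Longrightarrow> ip (\<lambda>x. f x - f' x) g = ip f g - ip f' g"
  using ip_add_left[of f \<Omega> "\<lambda>x. (-1) * f' x" g] L2_scale[of f' \<Omega> "-1"] ip_scale_left[of "-1" f' g]
  by simp

lemma ip_sum_left:
  assumes "finite U" "\<And>u. u \<in> U \<Longrightarrow> h u \<in> L2 \<Omega>" "g \<in> L2 \<Omega>"
  shows "ip (\<lambda>x. \<Sum>u\<in>U. c u * h u x) g = (\<Sum>u\<in>U. c u * ip (h u) g)"
  using assms
proof (induction U rule: finite_induct)
  case empty
  then show ?case
    by (simp add: ip_def)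
next
  case (insert a U)
  then have "ip (\<lambda>x. c a * h a x + (\<Sum>u\<in>U. c u * h u x)) g
      = ip (\<lambda>x. c a * h a x) g + ip (\<lambda>x. \<Sum>u\<in>U. c u * h u x) g"
    by (intro ip_add_left[where \<Omega>=\<Omega>] L2_scale L2_sum) auto
  with insert show ?case
    by (simp add: ip_scale_left)
qed

lemma ip_sum_right:
  assumes "finite U" "\<And>u. u \<in> U \<Longrightarrow> h u \<in> L2 \<Omega>" "g \<in> L2 \<Omega>"
  shows "ip g (\<lambda>x. \<Sum>u\<in>U. c u * h u x) = (\<Sum>u\<in>U. cnj (c u) * ip g (h u))"
  by (subst ip_cnj) (simp add: ip_sum_left[OF assms] ip_cnj[of g])

lemma ip_cong_AE:
  "f \<in> borel_measurable lborel \<Longrightarrow> f' \<in> borel_measurable lborel \<Longrightarrow> g \<in> borel_measurable lborel \<Longrightarrow>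
   (AE x in lborel. f x = f' x) \<Longrightarrow> ip f g = ip f' g"
  unfolding ip_def by (rule integral_cong_AE) auto

lemma orthonormal_ip:
  "orthonormal U \<Longrightarrow> u \<in> U \<Longrightarrow> v \<in> U \<Longrightarrow> ip u v = (if u = v then 1 else 0)"
  unfolding orthonormal_def by auto

lemma ip_orthonormal_sum:
  assumes "finite U" "U \<subseteq> L2 \<Omega>" "orthonormal U" "w \<in> U"
  shows "ip (\<lambda>x. \<Sum>u\<in>U. c u * u x) w = c w"
proof -
  have "ip (\<lambda>x. \<Sum>u\<in>U. c u * u x) w = (\<Sum>u\<in>U. c u * ip u w)"
    using assms by (intro ip_sum_left[where \<Omega>=\<Omega>]) auto
  also have "\<dots> = (\<Sum>u\<in>U. if u = w then c u else 0)"
    using assms by (intro sum.cong) (auto simp: orthonormal_ip)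
  also have "\<dots> = c w"
    using assms by simp
  finally show ?thesis .
qed

lemma parseval:
  assumes "finite U" "U \<subseteq> L2 \<Omega>" "orthonormal U"
  shows "(l2norm (\<lambda>x. \<Sum>u\<in>U. c u * u x))^2 = (\<Sum>u\<in>U. (cmod (c u))^2)"
proof -
  let ?s = "\<lambda>x. \<Sum>u\<in>U. c u * u x"
  have "complex_of_real ((l2norm ?s)^2) = ip ?s ?s"
    by (simp add: ip_self)
  also have "\<dots> = (\<Sum>u\<in>U. cnj (c u) * ip ?s u)"
    using assms by (intro ip_sum_right[where \<Omega>=\<Omega>] L2_sum) auto
  also have "\<dots> = (\<Sum>u\<in>U. c u * cnj (c u))"
  proof (intro sum.cong refl)
    fix u
    assume "u \<in> U"
    show "cnj (c u) * ip ?s u = c u * cnj (c u)"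
      by (subst ip_orthonormal_sum[OF assms \<open>u \<in> U\<close>]) (rule mult.commute)
  qed
  also have "\<dots> = complex_of_real (\<Sum>u\<in>U. (cmod (c u))^2)"
    by (simp only: of_real_sum complex_norm_square)
  finally show ?thesis
    using of_real_eq_iff by blast
qed

lemma parseval_AE:
  assumes "finite U" "U \<subseteq> L2 \<Omega>" "orthonormal U" "h \<in> borel_measurable lborel"
    and "AE x in lborel. h x = (\<Sum>u\<in>U. c u * u x)"
  shows "(l2norm h)^2 = (\<Sum>u\<in>U. (cmod (c u))^2)"
  using assms parseval[OF assms(1-3)]
  by (subst l2norm_cong_AE[OF _ L2_borel_measurable[OF L2_sum]]) auto

lemma bessel_inequality:
  assumes "finite S" "S \<subseteq> L2 \<Omega>" "orthonormal S" "h \<in> L2 \<Omega>"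
  shows "(\<Sum>e\<in>S. (cmod (ip h e))^2) \<le> (l2norm h)^2"
proof -
  let ?s = "\<lambda>x. \<Sum>e\<in>S. ip h e * e x"
  let ?d = "\<lambda>x. h x - ?s x"
  have sL: "?s \<in> L2 \<Omega>"
    using assms by (intro L2_sum) auto
  have dL: "?d \<in> L2 \<Omega>"
    using assms(4) sL by (rule L2_diff)
  have "ip ?d e = 0" if "e \<in> S" for e
    using ip_diff_left[OF assms(4) sL] ip_orthonormal_sum[OF assms(1-3) that] that assms by auto
  then have d_perp_s: "ip ?d ?s = 0"
    using ip_sum_right[OF assms(1) _ dL, of "\<lambda>e. e" "\<lambda>e. ip h e"] assms by auto
  have "ip ?s h = (\<Sum>e\<in>S. ip h e * ip e h)"
    using ip_sum_left[OF assms(1) _ assms(4), of "\<lambda>e. e" "\<lambda>e. ip h e"] assms by auto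
  also have "\<dots> = complex_of_real (\<Sum>e\<in>S. (cmod (ip h e))^2)"
    by (simp only: ip_cnj[of _ h] of_real_sum complex_norm_square)
  finally have s_h: "ip ?s h = complex_of_real (\<Sum>e\<in>S. (cmod (ip h e))^2)" .
  have "complex_of_real ((l2norm ?d)^2) = cnj (ip h ?d - ip ?s ?d)"
    by (simp add: ip_self ip_diff_left[OF assms(4) sL dL, symmetric] flip: ip_cnj)
  also have "\<dots> = ip ?d h"
    using d_perp_s by (simp add: ip_cnj[of ?d])
  also have "\<dots> = complex_of_real ((l2norm h)^2 - (\<Sum>e\<in>S. (cmod (ip h e))^2))"
    using ip_diff_left[OF assms(4) sL assms(4)] s_h by (simp add: ip_self)
  finally have "(l2norm ?d)^2 = (l2norm h)^2 - (\<Sum>e\<in>S. (cmod (ip h e))^2)"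
    using of_real_eq_iff by blast
  then show ?thesis
    using zero_le_power2[of "l2norm ?d"] by linarith
qed

lemma ip_normalised:
  assumes "l2norm h \<noteq> 0"
  shows "ip (\<lambda>x. complex_of_real (1 / l2norm h) * h x) (\<lambda>x. complex_of_real (1 / l2norm h) * h x) = 1"
    and "ip h (\<lambda>x. complex_of_real (1 / l2norm h) * h x) = complex_of_real (l2norm h)"
proof -
  have "ip h (\<lambda>x. complex_of_real (1 / l2norm h) * h x) = complex_of_real (1 / l2norm h * (l2norm h)^2)"
    by (simp only: ip_scale_right ip_self complex_cnj_complex_of_real of_real_mult)
  then show "ip h (\<lambda>x. complex_of_real (1 / l2norm h) * h x) = complex_of_real (l2norm h)"
    using assms by (simp add: power2_eq_square)
  then have "ip (\<lambda>x. complex_of_real (1 / l2norm h) * h x) (\<lambda>x. complex_of_real (1 / l2norm h) * h x)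
      = complex_of_real (1 / l2norm h) * complex_of_real (l2norm h)"
    by (simp only: ip_scale_left)
  then show "ip (\<lambda>x. complex_of_real (1 / l2norm h) * h x) (\<lambda>x. complex_of_real (1 / l2norm h) * h x) = 1"
    using assms by (simp flip: of_real_mult)
qed

lemma orthonormal_extend:
  assumes U: "finite U" "U \<subseteq> L2 \<Omega>" "orthonormal U" and f: "f \<in> L2 \<Omega>"
  shows "\<exists>U'. U \<subseteq> U' \<and> finite U' \<and> U' \<subseteq> L2 \<Omega> \<and> orthonormal U' \<and>
           (AE x in lborel. f x = (\<Sum>u\<in>U'. ip f u * u x))"
proof -
  let ?s = "\<lambda>x. \<Sum>u\<in>U. ip f u * u x"
  let ?h = "\<lambda>x. f x - ?s x"
  have sL: "?s \<in> L2 \<Omega>"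
    using U by (intro L2_sum) auto
  have hL: "?h \<in> L2 \<Omega>"
    using f sL by (rule L2_diff)
  have h_perp: "ip ?h w = 0" if "w \<in> U" for w
    using ip_diff_left[OF f sL] ip_orthonormal_sum[OF U that] that U by auto
  show ?thesis
  proof (cases "l2norm ?h = 0")
    case True
    then have "AE x in lborel. f x = ?s x"
      using l2norm_eq_0_imp_AE_zero[OF hL] by auto
    with U show ?thesis
      by blast
  next
    case False
    define u0 where "u0 = (\<lambda>x. complex_of_real (1 / l2norm ?h) * ?h x)"
    have u0L: "u0 \<in> L2 \<Omega>"
      unfolding u0_def using hL by (rule L2_scale)
    have u0_unit: "ip u0 u0 = 1" and h_u0: "ip ?h u0 = complex_of_real (l2norm ?h)"
      unfolding u0_def using ip_normalised[OF False] by simp_all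
    have u0_perp: "ip u0 w = 0" if "w \<in> U" for w
      unfolding u0_def by (simp only: ip_scale_left h_perp[OF that] mult_zero_right)
    have perp_u0: "ip w u0 = 0" if "w \<in> U" for w
      using u0_perp[OF that] by (simp add: ip_cnj[of w])
    have u0_new: "u0 \<notin> U"
      using u0_unit u0_perp by force
    have "ip f u0 = ip (\<lambda>x. ?h x + ?s x) u0"
      by simp
    also have "\<dots> = ip ?h u0 + ip ?s u0"
      using hL sL u0L by (rule ip_add_left)
    also have "ip ?s u0 = 0"
      using ip_sum_left[OF U(1) _ u0L, of "\<lambda>u. u" "\<lambda>u. ip f u"] U perp_u0 by auto
    finally have "ip f u0 = complex_of_real (l2norm ?h)"
      using h_u0 by simp
    then have "f x = (\<Sum>u\<in>insert u0 U. ip f u * u x)" for x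
      using U u0_new False by (simp add: u0_def)
    moreover have "orthonormal (insert u0 U)"
      using U(3) u0_unit u0_perp perp_u0 unfolding orthonormal_def by auto
    ultimately show ?thesis
      using U u0L by (intro exI[of _ "insert u0 U"]) auto
  qed
qed

lemma orthonormal_expansion_superset:
  assumes U': "finite U'" "U' \<subseteq> L2 \<Omega>" "orthonormal U'" and "U \<subseteq> U'"
    and g: "g \<in> L2 \<Omega>" and rep: "AE x in lborel. g x = (\<Sum>u\<in>U. ip g u * u x)"
  shows "AE x in lborel. g x = (\<Sum>u\<in>U'. ip g u * u x)"
proof -
  have U: "finite U" "U \<subseteq> L2 \<Omega>" "orthonormal U"
    using U' \<open>U \<subseteq> U'\<close> by (auto intro: finite_subset simp: orthonormal_def subset_iff)
  have "ip g w = 0" if "w \<in> U' - U" for w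
  proof -
    have "ip g w = ip (\<lambda>x. \<Sum>u\<in>U. ip g u * u x) w"
      using g U U' that rep by (intro ip_cong_AE L2_borel_measurable[where \<Omega>=\<Omega>] L2_sum) auto
    also have "\<dots> = (\<Sum>u\<in>U. ip g u * ip u w)"
      using U U' that by (intro ip_sum_left[where \<Omega>=\<Omega>]) auto
    also have "\<dots> = 0"
      using U' that \<open>U \<subseteq> U'\<close> by (auto simp: orthonormal_ip intro!: sum.neutral)
    finally show ?thesis .
  qed
  then have "(\<Sum>u\<in>U'. ip g u * u x) = (\<Sum>u\<in>U. ip g u * u x)" for x
    using U'(1) \<open>U \<subseteq> U'\<close> by (intro sum.mono_neutral_right) auto
  with rep show ?thesis
    by simp
qed

lemma gram_schmidt:
  assumes "finite F" "F \<subseteq> L2 \<Omega>"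
  shows "\<exists>U. finite U \<and> U \<subseteq> L2 \<Omega> \<and> orthonormal U \<and>
           (\<forall>f\<in>F. AE x in lborel. f x = (\<Sum>u\<in>U. ip f u * u x))"
  using assms
proof (induction F rule: finite_induct)
  case empty
  show ?case
    by (intro exI[of _ "{}"]) (auto simp: orthonormal_def)
next
  case (insert f F)
  then obtain U where U: "finite U" "U \<subseteq> L2 \<Omega>" "orthonormal U"
    and rep: "\<forall>g\<in>F. AE x in lborel. g x = (\<Sum>u\<in>U. ip g u * u x)"
    by auto
  obtain U' where U': "U \<subseteq> U'" "finite U'" "U' \<subseteq> L2 \<Omega>" "orthonormal U'"
    and rep_f: "AE x in lborel. f x = (\<Sum>u\<in>U'. ip f u * u x)"
    using orthonormal_extend[OF U, of f] insert.prems by auto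
  have "\<forall>g\<in>F. AE x in lborel. g x = (\<Sum>u\<in>U'. ip g u * u x)"
    using orthonormal_expansion_superset[OF U'(2-4,1)] rep insert.prems by auto
  with U' rep_f show ?case
    by auto
qed

lemma ip_indicator_mult_left: "u \<in> L2 A \<Longrightarrow> ip (\<lambda>y. indicator A y * e y) u = ip e u"
  unfolding ip_def by (rule Bochner_Integration.integral_cong) (auto simp: L2_def split: split_indicator)

section \<open>Linear operators on \<open>L2\<close>\<close>

definition linop :: "complex set \<Rightarrow> op \<Rightarrow> bool" where
  "linop \<Omega> T \<longleftrightarrow>
     (\<forall>f\<in>L2 \<Omega>. T f \<in> L2 \<Omega>) \<and>
     (\<forall>f\<in>L2 \<Omega>. \<forall>g\<in>L2 \<Omega>. (AE x in lborel. f x = g x) \<longrightarrow> (AE x in lborel. T f x = T g x)) \<and>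
     (\<forall>f\<in>L2 \<Omega>. \<forall>g\<in>L2 \<Omega>. \<forall>a b::complex.
         AE x in lborel. T (\<lambda>y. a * f y + b * g y) x = a * T f x + b * T g x)"

lemma bop_imp_linop: "bop \<Omega> T \<Longrightarrow> linop \<Omega> T"
  unfolding bop_def linop_def by blast

lemma linop_L2: "linop \<Omega> T \<Longrightarrow> f \<in> L2 \<Omega> \<Longrightarrow> T f \<in> L2 \<Omega>"
  by (simp add: linop_def)

lemma linop_cong_AE:
  "linop \<Omega> T \<Longrightarrow> f \<in> L2 \<Omega> \<Longrightarrow> g \<in> L2 \<Omega> \<Longrightarrow> (AE x in lborel. f x = g x) \<Longrightarrow>
   AE x in lborel. T f x = T g x"
  by (simp add: linop_def)

lemma linop_linear:
  "linop \<Omega> T \<Longrightarrow> f \<in> L2 \<Omega> \<Longrightarrow> g \<in> L2 \<Omega> \<Longrightarrow>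
   AE x in lborel. T (\<lambda>y. a * f y + b * g y) x = a * T f x + b * T g x"
  by (simp add: linop_def)

lemma linop_sum:
  assumes X: "linop \<Omega> X" and "finite U" "U \<subseteq> L2 \<Omega>"
  shows "AE x in lborel. X (\<lambda>y. \<Sum>u\<in>U. c u * u y) x = (\<Sum>u\<in>U. c u * X u x)"
  using assms(2,3)
proof (induction U rule: finite_induct)
  case empty
  show ?case
    using linop_linear[OF X L2_zero L2_zero, of 0 0] by simp
next
  case (insert a U)
  have sL: "(\<lambda>y. \<Sum>u\<in>U. c u * u y) \<in> L2 \<Omega>"
    using insert by (intro L2_sum) auto
  have split: "(\<lambda>y. \<Sum>u\<in>insert a U. c u * u y) = (\<lambda>y. c a * a y + 1 * (\<Sum>u\<in>U. c u * u y))"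
    using insert by simp
  have "AE x in lborel. X (\<lambda>y. c a * a y + 1 * (\<Sum>u\<in>U. c u * u y)) x
          = c a * X a x + 1 * X (\<lambda>y. \<Sum>u\<in>U. c u * u y) x"
    using linop_linear[OF X _ sL, of a "c a" 1] insert by simp
  moreover have "AE x in lborel. X (\<lambda>y. \<Sum>u\<in>U. c u * u y) x = (\<Sum>u\<in>U. c u * X u x)"
    using insert by auto
  ultimately show ?case
    unfolding split by eventually_elim (simp add: insert(1,2))
qed

lemma linop_expansion_l2norm:
  assumes X: "linop \<Omega> X" and U: "finite U" "U \<subseteq> L2 \<Omega>"
    and W: "finite W" "W \<subseteq> L2 \<Omega>" "orthonormal W"
    and rep_W: "\<forall>u\<in>U. AE x in lborel. X u x = (\<Sum>w\<in>W. ip (X u) w * w x)"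
    and h: "h \<in> L2 \<Omega>" and rep_h: "AE x in lborel. h x = (\<Sum>u\<in>U. c u * u x)"
  shows "(l2norm (X h))^2 = (\<Sum>w\<in>W. (cmod (\<Sum>u\<in>U. c u * ip (X u) w))^2)"
proof (rule parseval_AE[OF W])
  have "AE x in lborel. X h x = X (\<lambda>y. \<Sum>u\<in>U. c u * u y) x"
    using U h rep_h by (intro linop_cong_AE[OF X] L2_sum) auto
  moreover have "AE x in lborel. X (\<lambda>y. \<Sum>u\<in>U. c u * u y) x = (\<Sum>u\<in>U. c u * X u x)"
    by (rule linop_sum[OF X U])
  moreover have "AE x in lborel. \<forall>u\<in>U. X u x = (\<Sum>w\<in>W. ip (X u) w * w x)"
    using rep_W U(1) by (intro AE_finite_allI) auto
  ultimately show "AE x in lborel. X h x = (\<Sum>w\<in>W. (\<Sum>u\<in>U. c u * ip (X u) w) * w x)"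
  proof eventually_elim
    case (elim x)
    then have "X h x = (\<Sum>u\<in>U. \<Sum>w\<in>W. c u * ip (X u) w * w x)"
      by (simp add: sum_distrib_left mult.assoc)
    then show ?case
      by (subst (asm) sum.swap) (simp add: sum_distrib_right)
  qed
  show "X h \<in> borel_measurable lborel"
    using linop_L2[OF X h] by (rule L2_borel_measurable)
qed

lemma linop_comm_combination:
  assumes T: "linop \<Omega> T" and f: "Linf \<Omega> f"
  shows "linop \<Omega> (\<lambda>e x. c1 * (f x * T e x) + c2 * T (\<lambda>y. f y * e y) x)"
proof -
  have fe: "(\<lambda>y. f y * e y) \<in> L2 \<Omega>" if "e \<in> L2 \<Omega>" for e
    using L2_mult_Linf[OF f that] .
  have TL: "T e \<in> L2 \<Omega>" if "e \<in> L2 \<Omega>" for e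
    using linop_L2[OF T that] .
  have "(\<lambda>x. c1 * (f x * T e x) + c2 * T (\<lambda>y. f y * e y) x) \<in> L2 \<Omega>" if e: "e \<in> L2 \<Omega>" for e
    using L2_add[OF L2_scale[OF L2_mult_Linf[OF f TL[OF e]]] L2_scale[OF TL[OF fe[OF e]]]] .
  moreover have "AE x in lborel. c1 * (f x * T e x) + c2 * T (\<lambda>y. f y * e y) x
                        = c1 * (f x * T e' x) + c2 * T (\<lambda>y. f y * e' y) x"
    if e: "e \<in> L2 \<Omega>" and e': "e' \<in> L2 \<Omega>" and ae: "AE x in lborel. e x = e' x" for e e'
  proof -
    have "AE x in lborel. f x * e x = f x * e' x"
      using ae by eventually_elim simp
    then have "AE x in lborel. T (\<lambda>y. f y * e y) x = T (\<lambda>y. f y * e' y) x"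
      using linop_cong_AE[OF T fe[OF e] fe[OF e']] by simp
    with linop_cong_AE[OF T e e' ae] show ?thesis
      by eventually_elim simp
  qed
  moreover have "AE x in lborel.
      c1 * (f x * T (\<lambda>y. a * e y + b * e' y) x) + c2 * T (\<lambda>y. f y * (a * e y + b * e' y)) x
      = a * (c1 * (f x * T e x) + c2 * T (\<lambda>y. f y * e y) x)
        + b * (c1 * (f x * T e' x) + c2 * T (\<lambda>y. f y * e' y) x)"
    if e: "e \<in> L2 \<Omega>" and e': "e' \<in> L2 \<Omega>" for e e' a b
  proof -
    have split: "(\<lambda>y. f y * (a * e y + b * e' y)) = (\<lambda>y. a * (f y * e y) + b * (f y * e' y))"
      by (simp add: algebra_simps)
    have "AE x in lborel. T (\<lambda>y. f y * (a * e y + b * e' y)) x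
        = a * T (\<lambda>y. f y * e y) x + b * T (\<lambda>y. f y * e' y) x"
      unfolding split by (rule linop_linear[OF T fe[OF e] fe[OF e']])
    with linop_linear[OF T e e', of a b] show ?thesis
      by eventually_elim (simp add: algebra_simps)
  qed
  ultimately show ?thesis
    unfolding linop_def by blast
qed

lemma linop_commut_Mult:
  assumes "linop \<Omega> T" "Linf \<Omega> f"
  shows "linop \<Omega> (commut (Mult f) T)"
proof -
  have "commut (Mult f) T = (\<lambda>e x. 1 * (f x * T e x) + (-1) * T (\<lambda>y. f y * e y) x)"
    unfolding commut_def Mult_def by (simp add: fun_eq_iff)
  then show ?thesis
    using linop_comm_combination[OF assms] by presburger
qed

lemma Linf_ee: "Linf \<Omega> (ee w)"
proof -
  have "continuous_on UNIV (ee w)"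
    unfolding ee_def by (intro continuous_intros)
  then have "ee w \<in> borel_measurable borel"
    by (rule borel_measurable_continuous_onI)
  moreover have "cmod (ee w x) \<le> 1" for x
    by (simp add: ee_def norm_exp_eq_Re)
  ultimately show ?thesis
    unfolding Linf_def by (auto intro!: exI[of _ 1])
qed

lemma linop_commut_UU:
  assumes "linop \<Omega> T"
  shows "linop \<Omega> (commut T (UU w))"
proof -
  have "commut T (UU w) = (\<lambda>e x. (-1) * (ee w x * T e x) + 1 * T (\<lambda>y. ee w y * e y) x)"
    unfolding commut_def UU_def Mult_def by (simp add: fun_eq_iff)
  then show ?thesis
    using linop_comm_combination[OF assms Linf_ee] by presburger
qed

section \<open>Hilbert--Schmidt norms under compression\<close>

lemma hs_norm_cong_AE:
  assumes "\<And>e. e \<in> L2 \<Omega> \<Longrightarrow> X e \<in> borel_measurable lborel"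
    and "\<And>e. e \<in> L2 \<Omega> \<Longrightarrow> Y e \<in> borel_measurable lborel"
    and "\<And>e. e \<in> L2 \<Omega> \<Longrightarrow> AE x in lborel. X e x = Y e x"
  shows "hs_norm \<Omega> X = hs_norm \<Omega> Y"
  unfolding hs_norm_def
proof (intro SUP_cong refl)
  fix S
  assume "S \<in> {S. finite S \<and> S \<subseteq> L2 \<Omega> \<and> orthonormal S}"
  then have "(\<Sum>e\<in>S. (l2norm (X e))^2) = (\<Sum>e\<in>S. (l2norm (Y e))^2)"
    using assms by (intro sum.cong refl) (auto intro!: arg_cong[where f="\<lambda>t. t^2"] l2norm_cong_AE)
  then show "ennreal (sqrt (\<Sum>e\<in>S. (l2norm (X e))^2)) = ennreal (sqrt (\<Sum>e\<in>S. (l2norm (Y e))^2))"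
    by simp
qed

lemma hs_norm_mono:
  assumes sub: "\<Omega>1 \<subseteq> \<Omega>2" and le: "\<And>e. e \<in> L2 \<Omega>1 \<Longrightarrow> l2norm (X e) \<le> l2norm (Y e)"
  shows "hs_norm \<Omega>1 X \<le> hs_norm \<Omega>2 Y"
  unfolding hs_norm_def
proof (rule SUP_mono)
  fix S
  assume S: "S \<in> {S. finite S \<and> S \<subseteq> L2 \<Omega>1 \<and> orthonormal S}"
  then have "(\<Sum>e\<in>S. (l2norm (X e))^2) \<le> (\<Sum>e\<in>S. (l2norm (Y e))^2)"
    using le by (intro sum_mono power_mono) (auto simp: l2norm_nonneg)
  moreover have "S \<in> {S. finite S \<and> S \<subseteq> L2 \<Omega>2 \<and> orthonormal S}"
    using S L2_mono[OF sub] by auto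
  ultimately show "\<exists>S'\<in>{S. finite S \<and> S \<subseteq> L2 \<Omega>2 \<and> orthonormal S}.
      ennreal (sqrt (\<Sum>e\<in>S. (l2norm (X e))^2)) \<le> ennreal (sqrt (\<Sum>e\<in>S'. (l2norm (Y e))^2))"
    by (intro bexI[of _ S] ennreal_leI) auto
qed

text \<open>The images of an orthonormal family of \<open>L2 \<Omega>2\<close> under compression to \<open>\<Omega>1\<close> need not be
  orthonormal. Expanding them in an orthonormal family \<open>U\<close> of \<open>L2 \<Omega>1\<close> and the images \<open>X u\<close> in an
  orthonormal family \<open>W\<close>, the sum over the family becomes \<open>\<Sum>w. \<Sum>e. \<bar>\<langle>e, z w\<rangle>\<bar>\<^sup>2\<close> with
  \<open>z w = \<Sum>u. \<langle>w, X u\<rangle> u\<close>, which Bessel's inequality bounds by \<open>\<Sum>u. \<parallel>X u\<parallel>\<^sup>2\<close>.\<close>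

lemma hs_sum_compress_le:
  assumes O1: "\<Omega>1 \<in> sets borel" and sub: "\<Omega>1 \<subseteq> \<Omega>2" and X: "linop \<Omega>1 X"
    and S: "finite S" "S \<subseteq> L2 \<Omega>2" "orthonormal S"
  shows "\<exists>U. finite U \<and> U \<subseteq> L2 \<Omega>1 \<and> orthonormal U \<and>
     (\<Sum>e\<in>S. (l2norm (X (\<lambda>y. indicator \<Omega>1 y * e y)))^2) \<le> (\<Sum>u\<in>U. (l2norm (X u))^2)"
proof -
  define P where "P e y = (indicator \<Omega>1 y :: complex) * e y" for e :: "complex \<Rightarrow> complex" and y
  have PL: "P e \<in> L2 \<Omega>1" if "e \<in> S" for e
    using L2_indicator_mult[OF O1] that S unfolding P_def by auto
  obtain U where U: "finite U" "U \<subseteq> L2 \<Omega>1" "orthonormal U"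
    and rep_U: "\<forall>f\<in>P ` S. AE x in lborel. f x = (\<Sum>u\<in>U. ip f u * u x)"
    using gram_schmidt[of "P ` S" \<Omega>1] S PL by auto
  have XU: "X u \<in> L2 \<Omega>1" if "u \<in> U" for u
    using linop_L2[OF X] U that by blast
  obtain W where W: "finite W" "W \<subseteq> L2 \<Omega>1" "orthonormal W"
    and rep_W: "\<forall>f\<in>X ` U. AE x in lborel. f x = (\<Sum>w\<in>W. ip f w * w x)"
    using gram_schmidt[of "X ` U" \<Omega>1] U XU by auto
  define z where "z w x = (\<Sum>u\<in>U. cnj (ip (X u) w) * u x)" for w x
  have zL: "z w \<in> L2 \<Omega>2" for w
    unfolding z_def using U L2_mono[OF sub] by (intro L2_sum) auto
  have XPe: "(l2norm (X (P e)))^2 = (\<Sum>w\<in>W. (cmod (ip (z w) e))^2)" if e: "e \<in> S" for e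
  proof -
    have "ip e (z w) = (\<Sum>u\<in>U. ip e u * ip (X u) w)" for w
      unfolding z_def using U S e L2_mono[OF sub]
      by (subst ip_sum_right[where \<Omega>=\<Omega>2]) (auto simp: mult.commute)
    then have z_e: "cmod (ip (z w) e) = cmod (\<Sum>u\<in>U. ip e u * ip (X u) w)" for w
      by (metis ip_cnj complex_mod_cnj)
    have "AE x in lborel. P e x = (\<Sum>u\<in>U. ip (P e) u * u x)"
      using rep_U e by auto
    moreover have "ip (P e) u = ip e u" if "u \<in> U" for u
      using U that unfolding P_def by (auto intro: ip_indicator_mult_left)
    ultimately have "AE x in lborel. P e x = (\<Sum>u\<in>U. ip e u * u x)"
      by (simp cong: sum.cong)
    then show ?thesis
      using linop_expansion_l2norm[OF X U(1,2) W _ PL[OF e]] rep_W z_e by simp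
  qed
  have "(\<Sum>e\<in>S. (l2norm (X (P e)))^2) = (\<Sum>w\<in>W. \<Sum>e\<in>S. (cmod (ip (z w) e))^2)"
    by (simp add: XPe sum.swap[of _ S])
  also have "\<dots> \<le> (\<Sum>w\<in>W. (l2norm (z w))^2)"
    by (intro sum_mono bessel_inequality[OF S zL])
  also have "\<dots> = (\<Sum>u\<in>U. \<Sum>w\<in>W. (cmod (ip (X u) w))^2)"
    unfolding z_def by (simp add: parseval[OF U] sum.swap[of _ W])
  also have "\<dots> = (\<Sum>u\<in>U. (l2norm (X u))^2)"
    using rep_W W XU by (intro sum.cong refl parseval_AE[symmetric] L2_borel_measurable) auto
  finally show ?thesis
    using U unfolding P_def by blast
qed

lemma hs_norm_compress:
  assumes O1: "\<Omega>1 \<in> sets borel" and sub: "\<Omega>1 \<subseteq> \<Omega>2" and X: "linop \<Omega>1 X"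
  shows "hs_norm \<Omega>2 (\<lambda>e. X (\<lambda>y. indicator \<Omega>1 y * e y)) = hs_norm \<Omega>1 X"
proof (rule antisym)
  show "hs_norm \<Omega>2 (\<lambda>e. X (\<lambda>y. indicator \<Omega>1 y * e y)) \<le> hs_norm \<Omega>1 X"
    unfolding hs_norm_def[of \<Omega>2]
  proof (rule SUP_least)
    fix S
    assume "S \<in> {S. finite S \<and> S \<subseteq> L2 \<Omega>2 \<and> orthonormal S}"
    then obtain U where U: "finite U" "U \<subseteq> L2 \<Omega>1" "orthonormal U"
      and le: "(\<Sum>e\<in>S. (l2norm (X (\<lambda>y. indicator \<Omega>1 y * e y)))^2) \<le> (\<Sum>u\<in>U. (l2norm (X u))^2)"
      using hs_sum_compress_le[OF O1 sub X] by blast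
    have "ennreal (sqrt (\<Sum>e\<in>S. (l2norm (X (\<lambda>y. indicator \<Omega>1 y * e y)))^2))
        \<le> ennreal (sqrt (\<Sum>u\<in>U. (l2norm (X u))^2))"
      using le by (intro ennreal_leI) simp
    also have "\<dots> \<le> hs_norm \<Omega>1 X"
      unfolding hs_norm_def using U by (intro SUP_upper) auto
    finally show "ennreal (sqrt (\<Sum>e\<in>S. (l2norm (X (\<lambda>y. indicator \<Omega>1 y * e y)))^2)) \<le> hs_norm \<Omega>1 X" .
  qed
  show "hs_norm \<Omega>1 X \<le> hs_norm \<Omega>2 (\<lambda>e. X (\<lambda>y. indicator \<Omega>1 y * e y))"
    using sub by (rule hs_norm_mono) (simp add: indicator_mult_L2)
qed

section \<open>Kirszbraun's extension theorem\<close>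

lemma continuous_on_Max:
  assumes "finite I" "I \<noteq> {}" "\<And>i. i \<in> I \<Longrightarrow> continuous_on S (f i)"
  shows "continuous_on S (\<lambda>w. MAX i\<in>I. (f i w :: real))"
  using assms
proof (induction I rule: finite_ne_induct)
  case (insert x F)
  then show ?case
    by (auto intro!: continuous_on_max)
qed simp

lemma weighted_pair_variance:
  fixes x :: "'p \<Rightarrow> 'a::real_inner"
  assumes "finite B" "sum \<mu> B = 1"
  shows "(\<Sum>y\<in>B. \<Sum>z\<in>B. \<mu> y * \<mu> z * (norm (x y - x z))^2)
       = 2 * (\<Sum>y\<in>B. \<mu> y * (norm (x y - c))^2) - 2 * (norm ((\<Sum>y\<in>B. \<mu> y *\<^sub>R x y) - c))^2"
proof -
  define X where "X y = x y - c" for y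
  have diff: "(norm (x y - x z))^2 = (norm (X y))^2 + (norm (X z))^2 - 2 * inner (X y) (X z)" for y z
  proof -
    have "x y - x z = X y - X z"
      by (simp add: X_def)
    then show ?thesis
      by (simp add: power2_norm_eq_inner inner_diff_left inner_diff_right inner_commute)
  qed
  have s1: "(\<Sum>y\<in>B. \<Sum>z\<in>B. \<mu> y * \<mu> z * (norm (X y))^2) = (\<Sum>y\<in>B. \<mu> y * (norm (X y))^2)"
    by (simp add: sum_distrib_left[symmetric] sum_distrib_right[symmetric] assms mult.commute mult.left_commute)
  have s2: "(\<Sum>y\<in>B. \<Sum>z\<in>B. \<mu> y * \<mu> z * (norm (X z))^2) = (\<Sum>y\<in>B. \<mu> y * (norm (X y))^2)"
    by (subst sum.swap) (simp add: sum_distrib_left[symmetric] sum_distrib_right[symmetric] assms mult.commute mult.left_commute)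
  have s3: "(\<Sum>y\<in>B. \<Sum>z\<in>B. \<mu> y * \<mu> z * inner (X y) (X z)) = (norm (\<Sum>y\<in>B. \<mu> y *\<^sub>R X y))^2"
    by (subst sum.swap)
       (simp add: power2_norm_eq_inner inner_sum_left inner_sum_right sum_distrib_left mult.assoc mult.left_commute)
  have s4: "(\<Sum>y\<in>B. \<mu> y *\<^sub>R X y) = (\<Sum>y\<in>B. \<mu> y *\<^sub>R x y) - c"
    by (simp add: X_def scaleR_diff_right sum_subtractf assms flip: scaleR_sum_left)
  have "(\<Sum>y\<in>B. \<Sum>z\<in>B. \<mu> y * \<mu> z * (norm (x y - x z))^2)
       = (\<Sum>y\<in>B. \<Sum>z\<in>B. \<mu> y * \<mu> z * (norm (X y))^2) + (\<Sum>y\<in>B. \<Sum>z\<in>B. \<mu> y * \<mu> z * (norm (X z))^2)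
         - 2 * (\<Sum>y\<in>B. \<Sum>z\<in>B. \<mu> y * \<mu> z * inner (X y) (X z))"
    by (simp add: diff algebra_simps sum.distrib sum_subtractf sum_distrib_left)
  then show ?thesis
    unfolding s1 s2 s3 s4 by (simp add: X_def)
qed

lemma weighted_sq_dist_centroid_le:
  fixes x :: "'p \<Rightarrow> 'a::real_inner" and y :: "'p \<Rightarrow> 'b::real_inner"
  assumes B: "finite B" and \<mu>: "\<forall>z\<in>B. 0 \<le> \<mu> z" "sum \<mu> B = 1"
    and expand: "\<forall>z\<in>B. \<forall>z'\<in>B. norm (x z - x z') \<le> norm (y z - y z')"
  shows "(\<Sum>z\<in>B. \<mu> z * (norm (x z - (\<Sum>z\<in>B. \<mu> z *\<^sub>R x z)))^2) \<le> (\<Sum>z\<in>B. \<mu> z * (norm (y z - p))^2)"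
proof -
  have "2 * (\<Sum>z\<in>B. \<mu> z * (norm (x z - (\<Sum>z\<in>B. \<mu> z *\<^sub>R x z)))^2)
      = (\<Sum>z\<in>B. \<Sum>z'\<in>B. \<mu> z * \<mu> z' * (norm (x z - x z'))^2)"
    using weighted_pair_variance[OF B \<mu>(2), of x "\<Sum>z\<in>B. \<mu> z *\<^sub>R x z"] by simp
  also have "\<dots> \<le> (\<Sum>z\<in>B. \<Sum>z'\<in>B. \<mu> z * \<mu> z' * (norm (y z - y z'))^2)"
    using expand \<mu>(1) by (intro sum_mono mult_left_mono power_mono) auto
  also have "\<dots> \<le> 2 * (\<Sum>z\<in>B. \<mu> z * (norm (y z - p))^2)"
    using weighted_pair_variance[OF B \<mu>(2), of y p] by simp
  finally show ?thesis
    by simp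
qed

lemma step_towards_closed_convex:
  fixes C :: "'a::euclidean_space set"
  assumes C: "closed C" "convex C" "C \<noteq> {}" and v: "v \<notin> C"
  shows "\<exists>q\<in>C. \<forall>c\<in>C. \<forall>t. 0 < t \<and> t < 2 \<longrightarrow> norm (v + t *\<^sub>R (q - v) - c) < norm (v - c)"
proof (intro bexI ballI allI impI)
  define q where "q = closest_point C v"
  show q: "q \<in> C"
    unfolding q_def using closest_point_exists(1)[OF C(1,3)] .
  fix c and t :: real
  assume c: "c \<in> C" and t: "0 < t \<and> t < 2"
  have "inner (v - q) (c - q) \<le> 0"
    using any_closest_point_dot[OF C(2,1) q c] closest_point_exists(2)[OF C(1,3)] by (simp add: q_def)
  moreover have "q \<noteq> v"
    using q v by auto
  then have "0 < t * (2 - t) * (norm (q - v))^2"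
    using t by simp
  moreover have "(norm (v + t *\<^sub>R (q - v) - c))^2
      = (norm (v - c))^2 + 2 * t * inner (v - q) (c - q) - t * (2 - t) * (norm (q - v))^2"
    unfolding power2_norm_eq_inner
    by (simp add: inner_add_left inner_add_right inner_diff_left inner_diff_right inner_commute
        algebra_simps power2_eq_square)
  ultimately have "(norm (v + t *\<^sub>R (q - v) - c))^2 < (norm (v - c))^2"
    using t by (smt (verit) mult_nonneg_nonpos)
  then show "norm (v + t *\<^sub>R (q - v) - c) < norm (v - c)"
    by (simp add: power_less_imp_less_base)
qed

lemma small_step_keeps_strict_bounds:
  fixes g :: "'i \<Rightarrow> 'a::real_normed_vector \<Rightarrow> real"
  assumes "finite K" and "\<forall>i\<in>K. isCont (g i) v" and "\<forall>i\<in>K. g i v < c"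
  shows "\<exists>t. 0 < t \<and> t < 1 \<and> (\<forall>i\<in>K. g i (v + t *\<^sub>R d) < c)"
proof -
  have "\<forall>\<^sub>F t in at_right 0. g i (v + t *\<^sub>R d) < c" if "i \<in> K" for i
  proof (rule order_tendstoD(2))
    have "isCont (\<lambda>t. g i (v + t *\<^sub>R d)) 0"
      by (rule isCont_o2[where f="\<lambda>t. v + t *\<^sub>R d"]) (use assms(2) that in \<open>auto intro: continuous_intros\<close>)
    then have "((\<lambda>t. g i (v + t *\<^sub>R d)) \<longlongrightarrow> g i v) (at 0)"
      by (simp add: isCont_def)
    then show "((\<lambda>t. g i (v + t *\<^sub>R d)) \<longlongrightarrow> g i v) (at_right 0)"
      by (rule tendsto_mono[OF at_le[OF subset_UNIV]])
  qed (use assms(3) that in auto)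
  then have "\<forall>\<^sub>F t in at_right 0. \<forall>i\<in>K. g i (v + t *\<^sub>R d) < c"
    using assms(1) by (intro eventually_ball_finite) auto
  moreover have "\<forall>\<^sub>F t in at_right (0::real). t < 1"
    by (rule order_tendstoD(2)[OF tendsto_ident_at]) simp
  ultimately have "\<forall>\<^sub>F t in at_right 0. 0 < t \<and> t < 1 \<and> (\<forall>i\<in>K. g i (v + t *\<^sub>R d) < c)"
    using eventually_at_right_less by eventually_elim auto
  then show ?thesis
    using eventually_happens'[OF trivial_limit_at_right_real] by blast
qed

text \<open>Minimising \<open>H w = max\<^sub>i (\<parallel>w - b i\<parallel>\<^sup>2 - r i)\<close> over the convex hull of the \<open>b i\<close>: if the
  minimiser \<open>v\<close> lay outside the convex hull of the points \<open>b i\<close> active at \<open>v\<close>, a small step towards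
  that hull would decrease every active term and so \<open>H\<close>.\<close>

lemma minimiser_in_active_hull:
  fixes I :: "'i set" and b :: "'i \<Rightarrow> 'b::euclidean_space" and r :: "'i \<Rightarrow> real"
  defines "H \<equiv> \<lambda>w. MAX i\<in>I. (norm (w - b i))^2 - r i"
  assumes fin: "finite I" and ne: "I \<noteq> {}"
    and v: "v \<in> convex hull (b ` I)" and v_min: "\<forall>w\<in>convex hull (b ` I). H v \<le> H w"
  shows "v \<in> convex hull (b ` {i\<in>I. (norm (v - b i))^2 - r i = H v})"
proof (rule ccontr)
  define g where "g i w = (norm (w - b i))^2 - r i" for i w
  define J where "J = {i\<in>I. g i v = H v}"
  assume "v \<notin> convex hull (b ` {i\<in>I. (norm (v - b i))^2 - r i = H v})"
  then have v_J: "v \<notin> convex hull (b ` J)"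
    by (simp add: J_def g_def)
  have g_le: "g i w \<le> H w" if "i \<in> I" for i w
    using fin that by (simp add: H_def g_def)
  have "H v \<in> (\<lambda>i. g i v) ` I"
    unfolding H_def g_def using fin ne by (intro Max_in) auto
  then have "J \<noteq> {}"
    by (auto simp: J_def)
  moreover have "finite J"
    using fin by (simp add: J_def)
  ultimately obtain q where q: "q \<in> convex hull (b ` J)"
    and closer: "\<forall>c\<in>convex hull (b ` J). \<forall>t. 0 < t \<and> t < 2 \<longrightarrow>
      norm (v + t *\<^sub>R (q - v) - c) < norm (v - c)"
    using step_towards_closed_convex[OF _ _ _ v_J]
    by (metis compact_imp_closed convex_convex_hull convex_hull_eq_empty finite_imageI
        finite_imp_compact_convex_hull image_is_empty)
  have active_decrease: "g j (v + t *\<^sub>R (q - v)) < H v" if "j \<in> J" "0 < t" "t < 1" for j t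
  proof -
    have "norm (v + t *\<^sub>R (q - v) - b j) < norm (v - b j)"
      using closer hull_inc[of "b j" "b ` J"] that by auto
    then have "(norm (v + t *\<^sub>R (q - v) - b j))^2 < (norm (v - b j))^2"
      by (simp add: power_strict_mono)
    then show ?thesis
      using that(1) by (simp add: g_def J_def)
  qed
  have "\<forall>i\<in>I - J. isCont (g i) v"
    unfolding g_def by (intro ballI continuous_intros)
  moreover have "\<forall>i\<in>I - J. g i v < H v"
  proof
    fix i
    assume "i \<in> I - J"
    then show "g i v < H v"
      using g_le[of i v] by (auto simp: J_def)
  qed
  ultimately obtain t where t: "0 < t" "t < 1" "\<forall>i\<in>I - J. g i (v + t *\<^sub>R (q - v)) < H v"
    using small_step_keeps_strict_bounds[OF finite_Diff[OF fin]] by blast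
  then have "g i (v + t *\<^sub>R (q - v)) < H v" if "i \<in> I" for i
    using active_decrease[of i t] that by (cases "i \<in> J") auto
  then have "H (v + t *\<^sub>R (q - v)) < H v"
    using fin ne by (simp add: H_def g_def)
  moreover have "v + t *\<^sub>R (q - v) \<in> convex hull (b ` I)"
  proof -
    have "v + t *\<^sub>R (q - v) = (1 - t) *\<^sub>R v + t *\<^sub>R q"
      by (simp add: algebra_simps)
    then show ?thesis
      using convexD[OF convex_convex_hull v, of q "1 - t" t] hull_mono[of "b ` J" "b ` I"] q t
      by (auto simp: J_def)
  qed
  ultimately show False
    using v_min by fastforce
qed

text \<open>Let \<open>v\<close> minimise \<open>H w = max\<^sub>i (\<parallel>w - b i\<parallel>\<^sup>2 - \<parallel>p - a i\<parallel>\<^sup>2)\<close>.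
  Then \<open>v\<close> is a convex combination of the active points \<open>b j\<close>, at which the bracket equals \<open>H v\<close>,
  so \<open>weighted_sq_dist_centroid_le\<close> forces \<open>H v \<le> 0\<close>.\<close>

lemma kirszbraun_finite:
  fixes a :: "'i \<Rightarrow> 'a::real_inner" and b :: "'i \<Rightarrow> 'b::euclidean_space"
  assumes fin: "finite I" and ne: "I \<noteq> {}"
    and lip: "\<forall>i\<in>I. \<forall>j\<in>I. norm (b i - b j) \<le> norm (a i - a j)"
  shows "\<exists>v. \<forall>i\<in>I. norm (v - b i) \<le> norm (p - a i)"
proof -
  define H where "H w = (MAX i\<in>I. (norm (w - b i))^2 - (norm (p - a i))^2)" for w
  define K where "K = convex hull (b ` I)"
  have "compact K" "K \<noteq> {}"
    using fin ne by (auto simp: K_def intro: finite_imp_compact_convex_hull)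
  moreover have "continuous_on K H"
    unfolding H_def using fin ne by (intro continuous_on_Max continuous_intros)
  ultimately obtain v where v: "v \<in> K" "\<forall>w\<in>K. H v \<le> H w"
    using continuous_attains_inf by blast
  have H_ge: "(norm (v - b i))^2 - (norm (p - a i))^2 \<le> H v" if "i \<in> I" for i
    using fin that by (simp add: H_def)
  have "H v \<le> 0"
  proof (rule ccontr)
    assume pos: "\<not> H v \<le> 0"
    define J where "J = {i\<in>I. (norm (v - b i))^2 - (norm (p - a i))^2 = H v}"
    define B where "B = b ` J"
    have B: "finite B" "v \<in> convex hull B"
      using minimiser_in_active_hull[where r="\<lambda>i. (norm (p - a i))^2"] fin ne v
      by (auto simp: B_def J_def H_def K_def)
    then obtain \<mu> where \<mu>: "\<forall>y\<in>B. 0 \<le> \<mu> y" "sum \<mu> B = 1" "(\<Sum>y\<in>B. \<mu> y *\<^sub>R y) = v"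
      by (auto simp: convex_hull_finite)
    define a' where "a' y = a (inv_into J b y)" for y
    have inv: "inv_into J b y \<in> J" "b (inv_into J b y) = y" if "y \<in> B" for y
      using that by (auto simp: B_def inv_into_into f_inv_into_f)
    have "\<forall>y\<in>B. \<forall>z\<in>B. norm (y - z) \<le> norm (a' y - a' z)"
      using lip inv unfolding a'_def J_def by (metis (no_types, lifting) mem_Collect_eq)
    then have "(\<Sum>y\<in>B. \<mu> y * (norm (y - v))^2) \<le> (\<Sum>y\<in>B. \<mu> y * (norm (a' y - p))^2)"
      using weighted_sq_dist_centroid_le[OF B(1) \<mu>(1,2), of "\<lambda>y. y" a' p] \<mu>(3) by simp
    moreover have "(\<Sum>y\<in>B. \<mu> y * (norm (y - v))^2) = (\<Sum>y\<in>B. \<mu> y * (norm (a' y - p))^2 + \<mu> y * H v)"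
    proof (intro sum.cong refl)
      fix y
      assume "y \<in> B"
      then have "(norm (y - v))^2 = (norm (a' y - p))^2 + H v"
        using inv[OF \<open>y \<in> B\<close>] by (auto simp: J_def a'_def norm_minus_commute)
      then show "\<mu> y * (norm (y - v))^2 = \<mu> y * (norm (a' y - p))^2 + \<mu> y * H v"
        by (simp add: distrib_left)
    qed
    moreover have "\<dots> = (\<Sum>y\<in>B. \<mu> y * (norm (a' y - p))^2) + H v"
      by (simp add: sum.distrib \<mu>(2) flip: sum_distrib_right)
    ultimately show False
      using pos by linarith
  qed
  then have sq_le: "(norm (v - b i))^2 \<le> (norm (p - a i))^2" if "i \<in> I" for i
    using H_ge[OF that] by linarith
  have "norm (v - b i) \<le> norm (p - a i)" if "i \<in> I" for i
    by (rule power2_le_imp_le[OF sq_le[OF that] norm_ge_zero])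
  then show ?thesis
    by blast
qed

lemma kirszbraun_point:
  fixes f :: "'a::real_inner \<Rightarrow> 'b::euclidean_space"
  assumes lip: "\<forall>x\<in>A. \<forall>y\<in>A. norm (f x - f y) \<le> norm (x - y)"
  shows "\<exists>v. \<forall>x\<in>A. norm (v - f x) \<le> norm (p - x)"
proof (cases "A = {}")
  case False
  then obtain x0 where x0: "x0 \<in> A"
    by auto
  define ball_at where "ball_at x = cball (f x) (norm (p - x))" for x
  have "cball (f x0) (norm (p - x0)) \<inter> \<Inter>(ball_at ` A) \<noteq> {}"
  proof (rule compact_imp_fip)
    fix F
    assume "finite F" "F \<subseteq> ball_at ` A"
    then obtain A' where A': "A' \<subseteq> A" "finite A'" "F = ball_at ` A'"
      by (meson finite_subset_image)
    have "\<forall>x\<in>insert x0 A'. \<forall>y\<in>insert x0 A'. norm (f x - f y) \<le> norm (x - y)"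
      using A' x0 lip by blast
    then obtain v where "\<forall>x\<in>insert x0 A'. norm (v - f x) \<le> norm (p - x)"
      using kirszbraun_finite[where I="insert x0 A'" and a="\<lambda>x. x" and b=f and p=p] A'(2) by blast
    then have "v \<in> cball (f x0) (norm (p - x0)) \<inter> \<Inter>F"
      by (auto simp: A'(3) ball_at_def dist_norm norm_minus_commute)
    then show "cball (f x0) (norm (p - x0)) \<inter> \<Inter>F \<noteq> {}"
      by blast
  qed (auto simp: ball_at_def)
  then obtain v where "\<forall>x\<in>A. dist (f x) v \<le> norm (p - x)"
    by (auto simp: ball_at_def)
  then show ?thesis
    by (metis dist_commute dist_norm)
qed simp

definition lipschitz_graph :: "('a::real_normed_vector \<times> 'b::real_normed_vector) set \<Rightarrow> bool" where
  "lipschitz_graph G \<longleftrightarrow> pairwise (\<lambda>u u'. norm (snd u - snd u') \<le> norm (fst u - fst u')) G"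

lemma lipschitz_graphD:
  "lipschitz_graph G \<Longrightarrow> (x, y) \<in> G \<Longrightarrow> (x', y') \<in> G \<Longrightarrow> norm (y - y') \<le> norm (x - x')"
  unfolding lipschitz_graph_def pairwise_def by (cases "(x, y) = (x', y')") fastforce+

lemma lipschitz_graph_insert:
  fixes G :: "('a::real_inner \<times> 'b::euclidean_space) set"
  assumes G: "lipschitz_graph G"
  shows "\<exists>v. lipschitz_graph (insert (x, v) G)"
proof -
  define h where "h z = (SOME y. (z, y) \<in> G)" for z
  have h: "(z, h z) \<in> G" if "z \<in> fst ` G" for z
    using that unfolding h_def by (auto intro: someI)
  have "\<forall>z\<in>fst ` G. \<forall>z'\<in>fst ` G. norm (h z - h z') \<le> norm (z - z')"
    using lipschitz_graphD[OF G h h] by blast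
  then obtain v where v: "\<forall>z\<in>fst ` G. norm (v - h z) \<le> norm (x - z)"
    using kirszbraun_point by blast
  have "norm (v - y) \<le> norm (x - z)" if "(z, y) \<in> G" for z y
  proof -
    have z: "z \<in> fst ` G"
      using that by force
    moreover have "y = h z"
      using lipschitz_graphD[OF G that h[OF z]] by simp
    ultimately show ?thesis
      using v by blast
  qed
  then show ?thesis
    using G unfolding lipschitz_graph_def
    by (intro exI[of _ v]) (force simp: pairwise_insert norm_minus_commute)
qed

text \<open>By Zorn's lemma there is a maximal 1-Lipschitz graph extending that of \<open>f\<close>; it is total
  by \<open>lipschitz_graph_insert\<close>.\<close>

theorem kirszbraun:
  fixes f :: "'a::real_inner \<Rightarrow> 'b::euclidean_space"
  assumes "1-lipschitz_on A f"
  shows "\<exists>g. 1-lipschitz_on UNIV g \<and> (\<forall>x\<in>A. g x = f x)"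
proof -
  define Z where "Z = {G. (\<lambda>x. (x, f x)) ` A \<subseteq> G \<and> lipschitz_graph G}"
  have "(\<lambda>x. (x, f x)) ` A \<in> Z"
    using assms by (auto simp: Z_def lipschitz_graph_def pairwise_def lipschitz_on_def dist_norm)
  then have "\<exists>M\<in>Z. \<forall>X\<in>Z. M \<subseteq> X \<longrightarrow> X = M"
    by (intro subset_Zorn_nonempty)
       (auto simp: Z_def lipschitz_graph_def subset_chain_def chain_subset_def intro!: pairwise_chain_Union)
  then obtain M where M: "(\<lambda>x. (x, f x)) ` A \<subseteq> M" "lipschitz_graph M"
    and M_max: "\<forall>X\<in>Z. M \<subseteq> X \<longrightarrow> X = M"
    by (auto simp: Z_def)
  have "\<exists>y. (x, y) \<in> M" for x
  proof -
    obtain v where "lipschitz_graph (insert (x, v) M)"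
      using lipschitz_graph_insert[OF M(2)] by blast
    moreover have "(\<lambda>x. (x, f x)) ` A \<subseteq> insert (x, v) M"
      using M(1) by blast
    ultimately have "insert (x, v) M = M"
      using M_max by (auto simp: Z_def)
    then show ?thesis
      by blast
  qed
  then obtain g where g: "\<And>x. (x, g x) \<in> M"
    by metis
  have "1-lipschitz_on UNIV g"
    using lipschitz_graphD[OF M(2) g g] by (simp add: lipschitz_on_def dist_norm)
  moreover have "g x = f x" if "x \<in> A" for x
  proof -
    have "(x, f x) \<in> M"
      using M(1) that by blast
    from lipschitz_graphD[OF M(2) g[of x] this] show ?thesis
      by simp
  qed
  ultimately show ?thesis
    by blast
qed

corollary kirszbraun_bounded:
  fixes f :: "'a::real_inner \<Rightarrow> 'b::euclidean_space"
  assumes "1-lipschitz_on A f" and "\<forall>x\<in>A. norm (f x) \<le> R" and "R \<ge> 0"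
  shows "\<exists>g. 1-lipschitz_on UNIV g \<and> (\<forall>x\<in>A. g x = f x) \<and> (\<forall>x. norm (g x) \<le> R)"
proof -
  obtain g where g: "1-lipschitz_on UNIV g" "\<forall>x\<in>A. g x = f x"
    using kirszbraun[OF assms(1)] by blast
  define S where "S = cball (0::'b) R"
  have S: "convex S" "closed S" "S \<noteq> {}"
    using assms(3) by (auto simp: S_def)
  define g' where "g' x = closest_point S (g x)" for x
  have "1-lipschitz_on UNIV g'"
    using g(1) closest_point_lipschitz[OF S] unfolding g'_def lipschitz_on_def
    by (meson order_trans)
  moreover have "\<forall>x\<in>A. g' x = f x"
    using g(2) assms(2) by (auto simp: g'_def S_def intro: closest_point_self)
  moreover have "\<forall>x. norm (g' x) \<le> R"
    using closest_point_in_set[OF S(2,3)] by (auto simp: g'_def S_def)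
  ultimately show ?thesis
    by blast
qed

section \<open>Functions that are 1-Lipschitz almost everywhere\<close>

lemma AE_positive_measure_near:
  fixes \<Omega> :: "'a::euclidean_space set"
  assumes "\<Omega> \<in> sets borel"
  shows "AE x in lborel. x \<in> \<Omega> \<longrightarrow> (\<forall>r>0. emeasure lborel (\<Omega> \<inter> ball x r) \<noteq> 0)"
proof -
  obtain \<B> :: "'a set set" where \<B>: "countable \<B>" "\<And>C. C \<in> \<B> \<Longrightarrow> open C"
    "\<And>S. open S \<Longrightarrow> \<exists>U. U \<subseteq> \<B> \<and> S = \<Union>U"
    using univ_second_countable by blast
  have "AE x in lborel. \<forall>C\<in>\<B>. emeasure lborel (\<Omega> \<inter> C) = 0 \<longrightarrow> x \<notin> \<Omega> \<inter> C"
  proof (subst AE_ball_countable[OF \<B>(1)], intro ballI)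
    fix C
    assume "C \<in> \<B>"
    then have "emeasure lborel (\<Omega> \<inter> C) = 0 \<Longrightarrow> \<Omega> \<inter> C \<in> null_sets lborel"
      using assms \<B>(2) by (auto simp: null_sets_def)
    then show "AE x in lborel. emeasure lborel (\<Omega> \<inter> C) = 0 \<longrightarrow> x \<notin> \<Omega> \<inter> C"
      by (cases "emeasure lborel (\<Omega> \<inter> C) = 0") (auto elim!: AE_mp[OF AE_not_in])
  qed
  then show ?thesis
  proof eventually_elim
    case (elim x)
    show ?case
    proof (intro impI allI notI)
      fix r :: real
      assume x: "x \<in> \<Omega>" and r: "0 < r" and null: "emeasure lborel (\<Omega> \<inter> ball x r) = 0"
      obtain U where U: "U \<subseteq> \<B>" "ball x r = \<Union>U"
        using \<B>(3)[of "ball x r"] by auto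
      moreover have "x \<in> ball x r"
        using r by simp
      ultimately obtain C where C: "C \<in> \<B>" "x \<in> C" "C \<subseteq> ball x r"
        by blast
      then have "emeasure lborel (\<Omega> \<inter> C) \<le> emeasure lborel (\<Omega> \<inter> ball x r)"
        using assms \<B>(2) by (intro emeasure_mono) auto
      with null elim x C show False
        by auto
    qed
  qed
qed

text \<open>Both bounds hold at a common partner arbitrarily close to \<open>x\<close>, because \<open>\<Omega>\<close> has positive
  measure near \<open>x\<close>.\<close>

lemma lipschitz_bound_common_partner:
  fixes f :: "'a::euclidean_space \<Rightarrow> 'b::real_normed_vector"
  assumes \<Omega>: "\<Omega> \<in> sets borel" and near: "\<forall>r>0. emeasure lborel (\<Omega> \<inter> ball x r) \<noteq> 0"
    and x: "AE y in lborel. y \<in> \<Omega> \<longrightarrow> norm (f x - f y) \<le> norm (x - y)"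
    and x': "AE y in lborel. y \<in> \<Omega> \<longrightarrow> norm (f x' - f y) \<le> norm (x' - y)"
  shows "norm (f x - f x') \<le> norm (x - x')"
proof (rule field_le_epsilon)
  fix e :: real
  assume e: "0 < e"
  from x x' have "AE y in lborel. y \<in> \<Omega> \<longrightarrow> norm (f x - f y) \<le> norm (x - y) \<and> norm (f x' - f y) \<le> norm (x' - y)"
    by eventually_elim auto
  then obtain N where N: "{y \<in> space lborel. \<not> (y \<in> \<Omega> \<longrightarrow> norm (f x - f y) \<le> norm (x - y) \<and>
      norm (f x' - f y) \<le> norm (x' - y))} \<subseteq> N" "N \<in> null_sets lborel"
    by (rule AE_E) (auto simp: null_sets_def)
  have "\<not> \<Omega> \<inter> ball x (e / 2) \<subseteq> N"
  proof
    assume "\<Omega> \<inter> ball x (e / 2) \<subseteq> N"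
    then have "emeasure lborel (\<Omega> \<inter> ball x (e / 2)) \<le> emeasure lborel N"
      using N(2) by (intro emeasure_mono) auto
    with near e N(2) show False
      by auto
  qed
  then obtain y where y: "y \<in> \<Omega>" "dist x y < e / 2" "y \<notin> N"
    by (metis Int_iff mem_ball subsetI)
  then have "norm (f x - f y) \<le> norm (x - y)" "norm (f x' - f y) \<le> norm (x' - y)"
    using N(1) by auto
  then have "norm (f x - f x') \<le> norm (x - y) + norm (x' - y)"
    using norm_triangle_ineq4[of "f x - f y" "f x' - f y"] by simp
  also have "\<dots> \<le> norm (x - x') + 2 * norm (x - y)"
    using norm_triangle_ineq[of "x' - x" "x - y"] by (simp add: norm_minus_commute)
  also have "\<dots> \<le> norm (x - x') + e"
    using y(2) by (simp add: dist_norm)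
  finally show "norm (f x - f x') \<le> norm (x - x') + e" .
qed

lemma lipschitz_on_conull_subset:
  fixes f :: "'a::euclidean_space \<Rightarrow> 'b::euclidean_space"
  assumes \<Omega>: "\<Omega> \<in> sets borel" and f: "f \<in> borel_measurable borel"
    and ae: "AE p in lborel \<Otimes>\<^sub>M lborel. fst p \<in> \<Omega> \<and> snd p \<in> \<Omega> \<longrightarrow>
         norm (f (fst p) - f (snd p)) \<le> norm (fst p - snd p)"
  shows "\<exists>A\<subseteq>\<Omega>. (AE x in lborel. x \<in> \<Omega> \<longrightarrow> x \<in> A) \<and> 1-lipschitz_on A f"
proof -
  define Q where "Q x y \<longleftrightarrow> (x \<in> \<Omega> \<and> y \<in> \<Omega> \<longrightarrow> norm (f x - f y) \<le> norm (x - y))" for x y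
  have "{p \<in> space (lborel \<Otimes>\<^sub>M lborel). Q (fst p) (snd p)} \<in> sets (lborel \<Otimes>\<^sub>M lborel)"
    unfolding Q_def using \<Omega> f by measurable
  from lborel_pair.AE_pair_iff[OF this] ae have "AE x in lborel. AE y in lborel. Q x y"
    unfolding Q_def by simp
  define A where "A = {x\<in>\<Omega>. (AE y in lborel. Q x y) \<and> (\<forall>r>0. emeasure lborel (\<Omega> \<inter> ball x r) \<noteq> 0)}"
  have "AE x in lborel. x \<in> \<Omega> \<longrightarrow> x \<in> A"
    using \<open>AE x in lborel. AE y in lborel. Q x y\<close> AE_positive_measure_near[OF \<Omega>]
    by eventually_elim (auto simp: A_def)
  moreover have "1-lipschitz_on A f"
    unfolding lipschitz_on_def dist_norm
    using lipschitz_bound_common_partner[OF \<Omega>] by (auto simp: A_def Q_def)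
  ultimately show ?thesis
    by (intro exI[of _ A]) (auto simp: A_def)
qed

lemma Linf_bound_nonneg:
  assumes "Linf \<Omega> f"
  shows "\<exists>B\<ge>0. AE x in lborel. x \<in> \<Omega> \<longrightarrow> cmod (f x) \<le> B"
proof -
  obtain B where "AE x in lborel. x \<in> \<Omega> \<longrightarrow> cmod (f x) \<le> B"
    using assms unfolding Linf_def by auto
  then have "AE x in lborel. x \<in> \<Omega> \<longrightarrow> cmod (f x) \<le> max B 0"
    by eventually_elim auto
  then show ?thesis
    by (intro exI[of _ "max B 0"]) auto
qed

lemma Lip1_Linf: "Lip1 \<Omega> f \<Longrightarrow> Linf \<Omega> f"
  by (simp add: Lip1_def)

lemma Lip1_subset:
  assumes sub: "\<Omega>1 \<subseteq> \<Omega>2" and g: "Lip1 \<Omega>2 g"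
  shows "Lip1 \<Omega>1 g"
proof -
  obtain B where bound: "AE x in lborel. x \<in> \<Omega>2 \<longrightarrow> cmod (g x) \<le> B"
    using g unfolding Lip1_def Linf_def by auto
  have lip: "AE p in lborel \<Otimes>\<^sub>M lborel. fst p \<in> \<Omega>2 \<and> snd p \<in> \<Omega>2 \<longrightarrow>
      cmod (g (fst p) - g (snd p)) \<le> cmod (fst p - snd p)"
    using g unfolding Lip1_def by auto
  have "AE x in lborel. x \<in> \<Omega>1 \<longrightarrow> cmod (g x) \<le> B"
    using bound by eventually_elim (use sub in auto)
  moreover have "AE p in lborel \<Otimes>\<^sub>M lborel. fst p \<in> \<Omega>1 \<and> snd p \<in> \<Omega>1 \<longrightarrow>
      cmod (g (fst p) - g (snd p)) \<le> cmod (fst p - snd p)"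
    using lip by eventually_elim (use sub in auto)
  ultimately show ?thesis
    using g unfolding Lip1_def Linf_def by auto
qed

lemma Lip1_extend:
  assumes \<Omega>1: "\<Omega>1 \<in> sets borel" and f: "Lip1 \<Omega>1 f"
  shows "\<exists>g. Lip1 \<Omega>2 g \<and> (AE x in lborel. x \<in> \<Omega>1 \<longrightarrow> g x = f x)"
proof -
  obtain B where B: "B \<ge> 0" "AE x in lborel. x \<in> \<Omega>1 \<longrightarrow> cmod (f x) \<le> B"
    using Linf_bound_nonneg[OF Lip1_Linf[OF f]] by blast
  have "f \<in> borel_measurable borel"
    and "AE p in lborel \<Otimes>\<^sub>M lborel. fst p \<in> \<Omega>1 \<and> snd p \<in> \<Omega>1 \<longrightarrow>
      norm (f (fst p) - f (snd p)) \<le> norm (fst p - snd p)"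
    using f unfolding Lip1_def Linf_def by auto
  then obtain A where A: "AE x in lborel. x \<in> \<Omega>1 \<longrightarrow> x \<in> A" "1-lipschitz_on A f"
    using lipschitz_on_conull_subset[OF \<Omega>1] by blast
  define A' where "A' = {x\<in>A. cmod (f x) \<le> B}"
  have "1-lipschitz_on A' f"
    using A(2) by (rule lipschitz_on_subset) (auto simp: A'_def)
  moreover have "\<forall>x\<in>A'. norm (f x) \<le> B"
    by (simp add: A'_def)
  ultimately obtain g where g: "1-lipschitz_on UNIV g" "\<forall>x\<in>A'. g x = f x" "\<forall>x. cmod (g x) \<le> B"
    using kirszbraun_bounded B(1) by blast
  have "g \<in> borel_measurable borel"
    using g(1) by (intro borel_measurable_continuous_onI lipschitz_on_continuous_on)
  moreover have "cmod (g x - g y) \<le> cmod (x - y)" for x y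
    using g(1) by (simp add: lipschitz_on_def dist_norm)
  ultimately have "Lip1 \<Omega>2 g"
    using g(3) unfolding Lip1_def Linf_def by (auto intro!: AE_I2 exI[of _ B])
  moreover have "AE x in lborel. x \<in> \<Omega>1 \<longrightarrow> g x = f x"
    using A(1) B(2) by eventually_elim (use g(2) in \<open>auto simp: A'_def\<close>)
  ultimately show ?thesis
    by blast
qed

section \<open>Embedding and compression of operators\<close>

lemma bop_bound: "bop \<Omega> T \<Longrightarrow> \<exists>K\<ge>0. \<forall>f\<in>L2 \<Omega>. l2norm (T f) \<le> K * l2norm f"
  unfolding bop_def
  by (metis (no_types, opaque_lifting) l2norm_nonneg max.cobounded1 max.cobounded2
      mult_right_mono order_trans)

lemma eop_eq: "f \<in> L2 \<Omega>1 \<Longrightarrow> eop \<Omega>1 \<Omega>2 S f = (\<lambda>x. indicator \<Omega>1 x * S f x)"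
  unfolding eop_def by (simp add: indicator_mult_L2)

lemma bop_iop:
  assumes \<Omega>1: "\<Omega>1 \<in> sets borel" and sub: "\<Omega>1 \<subseteq> \<Omega>2" and T: "bop \<Omega>1 T"
  shows "bop \<Omega>2 (iop \<Omega>2 \<Omega>1 T)"
proof -
  have P: "(\<lambda>y. indicator \<Omega>1 y * f y) \<in> L2 \<Omega>1" if "f \<in> L2 \<Omega>2" for f
    using L2_indicator_mult[OF \<Omega>1 that] .
  have T': "linop \<Omega>1 T"
    using T by (rule bop_imp_linop)
  obtain K where K: "K \<ge> 0" "\<forall>f\<in>L2 \<Omega>1. l2norm (T f) \<le> K * l2norm f"
    using bop_bound[OF T] by blast
  have "\<forall>f\<in>L2 \<Omega>2. iop \<Omega>2 \<Omega>1 T f \<in> L2 \<Omega>2"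
    unfolding iop_def using linop_L2[OF T' P] L2_mono[OF sub] by blast
  moreover have "\<forall>f\<in>L2 \<Omega>2. \<forall>g\<in>L2 \<Omega>2. (AE x in lborel. f x = g x) \<longrightarrow>
      (AE x in lborel. iop \<Omega>2 \<Omega>1 T f x = iop \<Omega>2 \<Omega>1 T g x)"
  proof (intro ballI impI)
    fix f g
    assume f: "f \<in> L2 \<Omega>2" and g: "g \<in> L2 \<Omega>2" and fg: "AE x in lborel. f x = g x"
    from fg have "AE x in lborel. indicator \<Omega>1 x * f x = indicator \<Omega>1 x * g x"
      by eventually_elim simp
    then show "AE x in lborel. iop \<Omega>2 \<Omega>1 T f x = iop \<Omega>2 \<Omega>1 T g x"
      unfolding iop_def using linop_cong_AE[OF T' P[OF f] P[OF g]] by simp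
  qed
  moreover have "\<forall>f\<in>L2 \<Omega>2. \<forall>g\<in>L2 \<Omega>2. \<forall>a b::complex. AE x in lborel.
      iop \<Omega>2 \<Omega>1 T (\<lambda>y. a * f y + b * g y) x = a * iop \<Omega>2 \<Omega>1 T f x + b * iop \<Omega>2 \<Omega>1 T g x"
  proof -
    have "(\<lambda>y. indicator \<Omega>1 y * (a * f y + b * g y))
        = (\<lambda>y. a * (indicator \<Omega>1 y * f y) + b * (indicator \<Omega>1 y * g y))" for a b :: complex and f g
      by (simp add: fun_eq_iff algebra_simps)
    then show ?thesis
      unfolding iop_def using linop_linear[OF T' P P] by presburger
  qed
  moreover have "\<forall>f\<in>L2 \<Omega>2. l2norm (iop \<Omega>2 \<Omega>1 T f) \<le> K * l2norm f"
  proof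
    fix f
    assume f: "f \<in> L2 \<Omega>2"
    have "l2norm (iop \<Omega>2 \<Omega>1 T f) \<le> K * l2norm (\<lambda>y. indicator \<Omega>1 y * f y)"
      unfolding iop_def using K P[OF f] by blast
    also have "\<dots> \<le> K * l2norm f"
      using K l2norm_indicator_mult_le[OF f \<Omega>1] by (intro mult_left_mono) auto
    finally show "l2norm (iop \<Omega>2 \<Omega>1 T f) \<le> K * l2norm f" .
  qed
  ultimately show ?thesis
    unfolding bop_def by blast
qed

lemma bop_eop:
  assumes \<Omega>1: "\<Omega>1 \<in> sets borel" and sub: "\<Omega>1 \<subseteq> \<Omega>2" and S: "bop \<Omega>2 S"
  shows "bop \<Omega>1 (eop \<Omega>1 \<Omega>2 S)"
proof -
  have L12: "f \<in> L2 \<Omega>2" if "f \<in> L2 \<Omega>1" for f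
    using L2_mono[OF sub] that by blast
  have S': "linop \<Omega>2 S"
    using S by (rule bop_imp_linop)
  obtain K where K: "\<forall>f\<in>L2 \<Omega>2. l2norm (S f) \<le> K * l2norm f"
    using bop_bound[OF S] by blast
  have "eop \<Omega>1 \<Omega>2 S f \<in> L2 \<Omega>1" if "f \<in> L2 \<Omega>1" for f
    using eop_eq[OF that] L2_indicator_mult[OF \<Omega>1 linop_L2[OF S' L12[OF that]]] by simp
  moreover have "AE x in lborel. eop \<Omega>1 \<Omega>2 S f x = eop \<Omega>1 \<Omega>2 S g x"
    if "f \<in> L2 \<Omega>1" "g \<in> L2 \<Omega>1" "AE x in lborel. f x = g x" for f g
    using linop_cong_AE[OF S' L12[OF that(1)] L12[OF that(2)] that(3)]
    unfolding eop_eq[OF that(1)] eop_eq[OF that(2)] by eventually_elim simp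
  moreover have "AE x in lborel. eop \<Omega>1 \<Omega>2 S (\<lambda>y. a * f y + b * g y) x
      = a * eop \<Omega>1 \<Omega>2 S f x + b * eop \<Omega>1 \<Omega>2 S g x"
    if f: "f \<in> L2 \<Omega>1" and g: "g \<in> L2 \<Omega>1" for f g a b
  proof -
    have fg: "(\<lambda>y. a * f y + b * g y) \<in> L2 \<Omega>1"
      using L2_add[OF L2_scale[OF f] L2_scale[OF g]] .
    from linop_linear[OF S' L12[OF f] L12[OF g], of a b] show ?thesis
      unfolding eop_eq[OF f] eop_eq[OF g] eop_eq[OF fg]
      by eventually_elim (simp add: algebra_simps)
  qed
  moreover have "l2norm (eop \<Omega>1 \<Omega>2 S f) \<le> K * l2norm f" if "f \<in> L2 \<Omega>1" for f
    using l2norm_indicator_mult_le[OF linop_L2[OF S' L12[OF that]] \<Omega>1] K L12[OF that]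
    unfolding eop_eq[OF that] by fastforce
  ultimately show ?thesis
    unfolding bop_def by blast
qed

lemma opnorm_iop:
  assumes \<Omega>1: "\<Omega>1 \<in> sets borel" and sub: "\<Omega>1 \<subseteq> \<Omega>2"
  shows "opnorm \<Omega>2 (iop \<Omega>2 \<Omega>1 T) = opnorm \<Omega>1 T"
proof -
  have "(\<lambda>f. l2norm (iop \<Omega>2 \<Omega>1 T f)) ` {f \<in> L2 \<Omega>2. l2norm f \<le> 1}
      = (\<lambda>f. l2norm (T f)) ` {f \<in> L2 \<Omega>1. l2norm f \<le> 1}"
  proof (intro equalityI subsetI)
    fix t
    assume "t \<in> (\<lambda>f. l2norm (iop \<Omega>2 \<Omega>1 T f)) ` {f \<in> L2 \<Omega>2. l2norm f \<le> 1}"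
    then obtain f where f: "f \<in> L2 \<Omega>2" "l2norm f \<le> 1" "t = l2norm (T (\<lambda>y. indicator \<Omega>1 y * f y))"
      unfolding iop_def by auto
    moreover have "l2norm (\<lambda>y. indicator \<Omega>1 y * f y) \<le> 1"
      using l2norm_indicator_mult_le[OF f(1) \<Omega>1] f(2) by simp
    ultimately show "t \<in> (\<lambda>f. l2norm (T f)) ` {f \<in> L2 \<Omega>1. l2norm f \<le> 1}"
      using L2_indicator_mult[OF \<Omega>1 f(1)] by blast
  next
    fix t
    assume "t \<in> (\<lambda>f. l2norm (T f)) ` {f \<in> L2 \<Omega>1. l2norm f \<le> 1}"
    then obtain f where f: "f \<in> L2 \<Omega>1" "l2norm f \<le> 1" "t = l2norm (T f)"
      by auto
    moreover have "iop \<Omega>2 \<Omega>1 T f = T f"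
      unfolding iop_def using indicator_mult_L2[OF f(1)] by simp
    ultimately show "t \<in> (\<lambda>f. l2norm (iop \<Omega>2 \<Omega>1 T f)) ` {f \<in> L2 \<Omega>2. l2norm f \<le> 1}"
      using L2_mono[OF sub] by force
  qed
  then show ?thesis
    unfolding opnorm_def by simp
qed

lemma opnorm_eop_le:
  assumes \<Omega>1: "\<Omega>1 \<in> sets borel" and sub: "\<Omega>1 \<subseteq> \<Omega>2" and S: "bop \<Omega>2 S"
  shows "opnorm \<Omega>1 (eop \<Omega>1 \<Omega>2 S) \<le> opnorm \<Omega>2 S"
  unfolding opnorm_def
proof (rule cSup_least)
  show "(\<lambda>f. l2norm (eop \<Omega>1 \<Omega>2 S f)) ` {f \<in> L2 \<Omega>1. l2norm f \<le> 1} \<noteq> {}"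
    using L2_zero[of \<Omega>1] by (auto simp: l2norm_def)
  obtain K where K: "K \<ge> 0" "\<forall>f\<in>L2 \<Omega>2. l2norm (S f) \<le> K * l2norm f"
    using bop_bound[OF S] by blast
  have bdd: "bdd_above ((\<lambda>f. l2norm (S f)) ` {f \<in> L2 \<Omega>2. l2norm f \<le> 1})"
  proof (rule bdd_aboveI)
    fix t
    assume "t \<in> (\<lambda>f. l2norm (S f)) ` {f \<in> L2 \<Omega>2. l2norm f \<le> 1}"
    then obtain f where "f \<in> L2 \<Omega>2" "l2norm f \<le> 1" "t = l2norm (S f)"
      by auto
    with K show "t \<le> K"
      by (metis mult_left_le order_trans)
  qed
  fix t
  assume "t \<in> (\<lambda>f. l2norm (eop \<Omega>1 \<Omega>2 S f)) ` {f \<in> L2 \<Omega>1. l2norm f \<le> 1}"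
  then obtain f where f: "f \<in> L2 \<Omega>1" "l2norm f \<le> 1" "t = l2norm (eop \<Omega>1 \<Omega>2 S f)"
    by auto
  have f2: "f \<in> L2 \<Omega>2"
    using f(1) L2_mono[OF sub] by blast
  have "t \<le> l2norm (S f)"
    unfolding f(3) eop_eq[OF f(1)]
    by (rule l2norm_indicator_mult_le[OF linop_L2[OF bop_imp_linop[OF S] f2] \<Omega>1])
  also have "\<dots> \<le> Sup ((\<lambda>f. l2norm (S f)) ` {f \<in> L2 \<Omega>2. l2norm f \<le> 1})"
    using f2 f(2) by (intro cSup_upper[OF _ bdd]) auto
  finally show "t \<le> Sup ((\<lambda>f. l2norm (S f)) ` {f \<in> L2 \<Omega>2. l2norm f \<le> 1})" .
qed

lemma eop_iop:
  assumes "bop \<Omega>1 T"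
  shows "op_eq \<Omega>1 (eop \<Omega>1 \<Omega>2 (iop \<Omega>2 \<Omega>1 T)) T"
  unfolding op_eq_def
proof (intro ballI AE_I2)
  fix f x
  assume f: "f \<in> L2 \<Omega>1"
  have "(\<lambda>y. indicator \<Omega>1 y * (indicator \<Omega>1 y * f y)) = (\<lambda>y. indicator \<Omega>1 y * f y)"
    by (auto simp: fun_eq_iff indicator_def)
  then have "eop \<Omega>1 \<Omega>2 (iop \<Omega>2 \<Omega>1 T) f x = indicator \<Omega>1 x * T f x"
    unfolding eop_def iop_def indicator_mult_L2[OF f] by simp
  also have "\<dots> = T f x"
    using assms f fun_cong[OF indicator_mult_L2, of "T f" \<Omega>1 x] by (simp add: bop_def)
  finally show "eop \<Omega>1 \<Omega>2 (iop \<Omega>2 \<Omega>1 T) f x = T f x" .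
qed

lemma commut_Mult_iop:
  "commut (Mult g) (iop \<Omega>2 \<Omega>1 T) = (\<lambda>e. commut (Mult g) T (\<lambda>y. indicator \<Omega>1 y * e y))"
  unfolding commut_def Mult_def iop_def by (simp add: fun_eq_iff mult.left_commute)

lemma commut_iop_UU:
  "commut (iop \<Omega>2 \<Omega>1 T) (UU w) = (\<lambda>e. commut T (UU w) (\<lambda>y. indicator \<Omega>1 y * e y))"
  unfolding commut_def UU_def Mult_def iop_def by (simp add: fun_eq_iff mult.left_commute)

lemma hs_norm_commut_Mult_cong_AE:
  assumes T: "linop \<Omega> T" and f: "Linf \<Omega> f" and g: "Linf \<Omega> g"
    and fg: "AE x in lborel. x \<in> \<Omega> \<longrightarrow> g x = f x"
  shows "hs_norm \<Omega> (commut (Mult f) T) = hs_norm \<Omega> (commut (Mult g) T)"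
proof (rule hs_norm_cong_AE)
  fix e
  assume e: "e \<in> L2 \<Omega>"
  show "commut (Mult f) T e \<in> borel_measurable lborel" "commut (Mult g) T e \<in> borel_measurable lborel"
    using linop_L2[OF linop_commut_Mult[OF T f] e] linop_L2[OF linop_commut_Mult[OF T g] e]
    by (simp_all add: L2_def)
  have "AE x in lborel. f x * e x = g x * e x"
    using fg by eventually_elim (use e in \<open>auto simp: L2_def\<close>)
  then have "AE x in lborel. T (\<lambda>y. f y * e y) x = T (\<lambda>y. g y * e y) x"
    using linop_cong_AE[OF T L2_mult_Linf[OF f e] L2_mult_Linf[OF g e]] by simp
  with fg show "AE x in lborel. commut (Mult f) T e x = commut (Mult g) T e x"
    unfolding commut_def Mult_def
    by eventually_elim (use linop_L2[OF T e] in \<open>auto simp: L2_def\<close>)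
qed

lemma LL_iop:
  assumes \<Omega>1: "\<Omega>1 \<in> sets borel" and sub: "\<Omega>1 \<subseteq> \<Omega>2" and T: "bop \<Omega>1 T"
  shows "LL \<Omega>2 (iop \<Omega>2 \<Omega>1 T) = LL \<Omega>1 T"
proof (rule antisym)
  have T': "linop \<Omega>1 T"
    using T by (rule bop_imp_linop)
  have compress: "hs_norm \<Omega>2 (commut (Mult g) (iop \<Omega>2 \<Omega>1 T)) = hs_norm \<Omega>1 (commut (Mult g) T)"
    if "Lip1 \<Omega>1 g" for g
    unfolding commut_Mult_iop
    by (rule hs_norm_compress[OF \<Omega>1 sub linop_commut_Mult[OF T' Lip1_Linf[OF that]]])
  show "LL \<Omega>2 (iop \<Omega>2 \<Omega>1 T) \<le> LL \<Omega>1 T"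
    unfolding LL_def[of \<Omega>2]
  proof (rule SUP_least)
    fix g
    assume "g \<in> {f. Lip1 \<Omega>2 f}"
    then have g: "Lip1 \<Omega>1 g"
      using Lip1_subset[OF sub] by auto
    then show "hs_norm \<Omega>2 (commut (Mult g) (iop \<Omega>2 \<Omega>1 T)) \<le> LL \<Omega>1 T"
      unfolding compress[OF g] LL_def by (intro SUP_upper) auto
  qed
  show "LL \<Omega>1 T \<le> LL \<Omega>2 (iop \<Omega>2 \<Omega>1 T)"
    unfolding LL_def[of \<Omega>1]
  proof (rule SUP_least)
    fix f
    assume "f \<in> {f. Lip1 \<Omega>1 f}"
    then have f: "Lip1 \<Omega>1 f"
      by simp
    obtain g where g: "Lip1 \<Omega>2 g" and fg: "AE x in lborel. x \<in> \<Omega>1 \<longrightarrow> g x = f x"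
      using Lip1_extend[OF \<Omega>1 f] by blast
    have g1: "Lip1 \<Omega>1 g"
      using Lip1_subset[OF sub g] .
    have "hs_norm \<Omega>1 (commut (Mult f) T) = hs_norm \<Omega>2 (commut (Mult g) (iop \<Omega>2 \<Omega>1 T))"
      unfolding compress[OF g1]
      by (rule hs_norm_commut_Mult_cong_AE[OF T' Lip1_Linf[OF f] Lip1_Linf[OF g1] fg])
    also have "\<dots> \<le> LL \<Omega>2 (iop \<Omega>2 \<Omega>1 T)"
      unfolding LL_def using g by (intro SUP_upper) auto
    finally show "hs_norm \<Omega>1 (commut (Mult f) T) \<le> LL \<Omega>2 (iop \<Omega>2 \<Omega>1 T)" .
  qed
qed

lemma LL1_iop:
  assumes \<Omega>1: "\<Omega>1 \<in> sets borel" and sub: "\<Omega>1 \<subseteq> \<Omega>2" and T: "bop \<Omega>1 T"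
  shows "LL1 \<Omega>2 (iop \<Omega>2 \<Omega>1 T) = LL1 \<Omega>1 T"
  unfolding LL1_def commut_iop_UU
  using hs_norm_compress[OF \<Omega>1 sub linop_commut_UU[OF bop_imp_linop[OF T]]] by simp

text \<open>For \<open>L\<close> the compression is estimated through a 1-Lipschitz extension \<open>g\<close> of \<open>f\<close> to \<open>\<Omega>2\<close>:
  on \<open>\<Omega>1\<close> the commutator of \<open>\<epsilon>(S)\<close> with \<open>M\<^sub>f\<close> agrees with that of \<open>S\<close> with \<open>M\<^sub>g\<close>.\<close>

lemma LL_eop_le:
  assumes \<Omega>1: "\<Omega>1 \<in> sets borel" and sub: "\<Omega>1 \<subseteq> \<Omega>2" and S: "bop \<Omega>2 S"
  shows "LL \<Omega>1 (eop \<Omega>1 \<Omega>2 S) \<le> LL \<Omega>2 S"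
  unfolding LL_def[of \<Omega>1]
proof (rule SUP_least)
  have S': "linop \<Omega>2 S"
    using S by (rule bop_imp_linop)
  have L12: "h \<in> L2 \<Omega>2" if "h \<in> L2 \<Omega>1" for h
    using L2_mono[OF sub] that by blast
  fix f
  assume "f \<in> {f. Lip1 \<Omega>1 f}"
  then have f: "Linf \<Omega>1 f"
    by (simp add: Lip1_Linf)
  obtain g where g: "Lip1 \<Omega>2 g" and fg: "AE x in lborel. x \<in> \<Omega>1 \<longrightarrow> g x = f x"
    using Lip1_extend[OF \<Omega>1] \<open>f \<in> {f. Lip1 \<Omega>1 f}\<close> by blast
  have "hs_norm \<Omega>1 (commut (Mult f) (eop \<Omega>1 \<Omega>2 S)) \<le> hs_norm \<Omega>2 (commut (Mult g) S)"
  proof (rule hs_norm_mono[OF sub])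
    fix e
    assume e: "e \<in> L2 \<Omega>1"
    have fe: "(\<lambda>y. f y * e y) \<in> L2 \<Omega>1" and ge: "(\<lambda>y. g y * e y) \<in> L2 \<Omega>1"
      using L2_mult_Linf[OF f e] L2_mult_Linf[OF Lip1_Linf[OF Lip1_subset[OF sub g]] e] .
    have "AE x in lborel. f x * e x = g x * e x"
      using fg by eventually_elim (use e in \<open>auto simp: L2_def\<close>)
    then have "AE x in lborel. S (\<lambda>y. f y * e y) x = S (\<lambda>y. g y * e y) x"
      using linop_cong_AE[OF S' L12[OF fe] L12[OF ge]] by simp
    with fg have "AE x in lborel. cmod (commut (Mult f) (eop \<Omega>1 \<Omega>2 S) e x) \<le> cmod (commut (Mult g) S e x)"
      unfolding commut_def Mult_def eop_eq[OF e] eop_eq[OF fe]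
      by eventually_elim (auto simp: indicator_def)
    moreover have "commut (Mult f) (eop \<Omega>1 \<Omega>2 S) e \<in> borel_measurable lborel"
      using linop_L2[OF linop_commut_Mult[OF bop_imp_linop[OF bop_eop[OF \<Omega>1 sub S]] f] e]
      by (rule L2_borel_measurable)
    ultimately show "l2norm (commut (Mult f) (eop \<Omega>1 \<Omega>2 S) e) \<le> l2norm (commut (Mult g) S e)"
      using linop_L2[OF linop_commut_Mult[OF S' Lip1_Linf[OF g]] L12[OF e]]
      by (intro l2norm_mono_AE) auto
  qed
  also have "\<dots> \<le> LL \<Omega>2 S"
    unfolding LL_def using g by (intro SUP_upper) auto
  finally show "hs_norm \<Omega>1 (commut (Mult f) (eop \<Omega>1 \<Omega>2 S)) \<le> LL \<Omega>2 S" .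
qed

lemma LL1_eop_le:
  assumes \<Omega>1: "\<Omega>1 \<in> sets borel" and sub: "\<Omega>1 \<subseteq> \<Omega>2" and S: "bop \<Omega>2 S"
  shows "LL1 \<Omega>1 (eop \<Omega>1 \<Omega>2 S) \<le> LL1 \<Omega>2 S"
  unfolding LL1_def
proof (intro SUP_mono bexI)
  fix w :: complex
  have S': "linop \<Omega>2 S"
    using S by (rule bop_imp_linop)
  have "hs_norm \<Omega>1 (commut (eop \<Omega>1 \<Omega>2 S) (UU w)) \<le> hs_norm \<Omega>2 (commut S (UU w))"
  proof (rule hs_norm_mono[OF sub])
    fix e
    assume e: "e \<in> L2 \<Omega>1"
    then have e2: "e \<in> L2 \<Omega>2"
      using L2_mono[OF sub] by blast
    have "commut (eop \<Omega>1 \<Omega>2 S) (UU w) e = (\<lambda>x. indicator \<Omega>1 x * commut S (UU w) e x)"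
      unfolding commut_def UU_def Mult_def eop_eq[OF e] eop_eq[OF L2_mult_Linf[OF Linf_ee e]]
      by (simp add: fun_eq_iff algebra_simps)
    then show "l2norm (commut (eop \<Omega>1 \<Omega>2 S) (UU w) e) \<le> l2norm (commut S (UU w) e)"
      using l2norm_indicator_mult_le[OF linop_L2[OF linop_commut_UU[OF S'] e2] \<Omega>1] by simp
  qed
  then show "ennreal (1 / cmod w) * hs_norm \<Omega>1 (commut (eop \<Omega>1 \<Omega>2 S) (UU w))
      \<le> ennreal (1 / cmod w) * hs_norm \<Omega>2 (commut S (UU w))"
    by (rule mult_left_mono) simp
qed

theorem proposition3p7:
  fixes \<Omega>1 \<Omega>2 :: "complex set"
  assumes "\<Omega>1 \<in> sets borel" and "\<Omega>2 \<in> sets borel" and "\<Omega>1 \<subseteq> \<Omega>2"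
  shows "iop \<Omega>2 \<Omega>1 ` EL \<Omega>1 \<subseteq> EL \<Omega>2
    \<and> (\<forall>T\<in>EL \<Omega>1. tnorm \<Omega>2 (iop \<Omega>2 \<Omega>1 T) = tnorm \<Omega>1 T
                 \<and> tnorm1 \<Omega>2 (iop \<Omega>2 \<Omega>1 T) = tnorm1 \<Omega>1 T
                 \<and> LL \<Omega>2 (iop \<Omega>2 \<Omega>1 T) = LL \<Omega>1 T
                 \<and> LL1 \<Omega>2 (iop \<Omega>2 \<Omega>1 T) = LL1 \<Omega>1 T)
    \<and> eop \<Omega>1 \<Omega>2 ` EL \<Omega>2 \<subseteq> EL \<Omega>1
    \<and> (\<forall>T\<in>EL \<Omega>1. \<exists>S\<in>EL \<Omega>2. op_eq \<Omega>1 (eop \<Omega>1 \<Omega>2 S) T)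
    \<and> (\<forall>S\<in>EL \<Omega>2. tnorm \<Omega>1 (eop \<Omega>1 \<Omega>2 S) \<le> tnorm \<Omega>2 S
                 \<and> tnorm1 \<Omega>1 (eop \<Omega>1 \<Omega>2 S) \<le> tnorm1 \<Omega>2 S)
    \<and> (\<forall>T. bop \<Omega>1 T \<longrightarrow> op_eq \<Omega>1 (eop \<Omega>1 \<Omega>2 (iop \<Omega>2 \<Omega>1 T)) T)"
proof -
  note \<Omega>1 = assms(1) and sub = assms(3)
  have iop_EL: "iop \<Omega>2 \<Omega>1 T \<in> EL \<Omega>2" if "T \<in> EL \<Omega>1" for T
    using that bop_iop[OF \<Omega>1 sub] LL_iop[OF \<Omega>1 sub] by (simp add: EL_def)
  have eop_EL: "eop \<Omega>1 \<Omega>2 S \<in> EL \<Omega>1" if "S \<in> EL \<Omega>2" for S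
    using that bop_eop[OF \<Omega>1 sub] LL_eop_le[OF \<Omega>1 sub] by (auto simp: EL_def intro: le_less_trans)
  have eop_norms: "tnorm \<Omega>1 (eop \<Omega>1 \<Omega>2 S) \<le> tnorm \<Omega>2 S \<and> tnorm1 \<Omega>1 (eop \<Omega>1 \<Omega>2 S) \<le> tnorm1 \<Omega>2 S"
    if "bop \<Omega>2 S" for S
    using ennreal_leI[OF opnorm_eop_le[OF \<Omega>1 sub that]] LL_eop_le[OF \<Omega>1 sub that] LL1_eop_le[OF \<Omega>1 sub that]
    unfolding tnorm_def tnorm1_def by (auto intro: add_mono)
  have eop_onto: "\<exists>S\<in>EL \<Omega>2. op_eq \<Omega>1 (eop \<Omega>1 \<Omega>2 S) T" if "T \<in> EL \<Omega>1" for T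
    using iop_EL[OF that] eop_iop that by (auto simp: EL_def)
  show ?thesis
    using iop_EL eop_EL eop_norms eop_onto eop_iop opnorm_iop[OF \<Omega>1 sub] LL_iop[OF \<Omega>1 sub] LL1_iop[OF \<Omega>1 sub]
    by (auto simp: EL_def tnorm_def tnorm1_def)
qed

end
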